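(* Let $E$ be a (real or complex, $\mathbb{F}\in\{\mathbb{R},\mathbb{C}\}$) nc base norm space with nc base $K$ and base function $f_1$, and let $n\in\mathbb{N}$. Then for selfadjoint $x\in M_n(E)$, $$\|x\|_n=\inf\{\|\alpha_1^*\alpha_1+\alpha_2^*\alpha_2\| : \alpha_i\in M_n(\mathbb{F}),\ x_i\in K_n,\ x=\alpha_1^*x_1\alpha_1-\alpha_2^*x_2\alpha_2\}.$$ Also $\|x\|_n=\|f_1^{(n)}(x)\|$ for all $x\in M_n(E)_+$. Moreover $K_n=\{x\in M_n(E)_+ : f_1^{(n)}(x)=I_n\}$.
   Context: A $*$-vector space over $\mathbb{F}$ has an involution (conjugate linear if $\mathbb{F}=\mathbb{C}$); $M_n(E)$ has involution $[x_{ij}]^*=[x_{ji}^*]$. A matrix ordered space: proper cones $M_n(E)_+\subseteq M_n(E)_{\rm sa}$ with $\alpha^*M_n(E)_+\alpha\subseteq M_m(E)_+$ for $\alpha\in M_{n,m}(\mathbb{F})$. Matrix ordered matrix normed: norms $\|\cdot\|_n$ on $M_n(E)$, cones closed, $\|x^*\|_n=\|x\|_n$. A matrix convex set $K=(K_n)$ is closed under direct sums and compressions $a^*xa$ by isometries $a\in M_{n,m}(\mathbb{F})$. $f^{(n)}[x_{ij}]=[f(x_{ij})]$. A nc base norm space is a matrix ordered matrix normed $*$-vector space $E$ which is an operator space, with a matrix convex set $K$ such that: (i) $K_n\subseteq M_n(E)_+$, $\|k\|_n\le 1$ for $k\in K_n$; (ii) each $K_n$ closed; (iii) for every $t>1$,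 every $x\in M_n(E)_{\rm sa}$ with $\|x\|_n\le1$ is $c_1x_1c_1-c_2x_2c_2$ with positive $c_i\in M_n(\mathbb{F})$, $c_1^2+c_2^2\le tI_n$, $x_i\in K_n$; (iv) there is a continuous positive linear functional $f_1$ on $E$ (selfadjoint in the real case), the base function, with $K_n=\{x\in M_n(E)_+:f_1^{(n)}(x)=I_n\}$ for all $n$. $K$ is then called the nc base. *)

theory Defs
  imports Complex_Main "Jordan_Normal_Form.Matrix"
begin

text \<open>Scalars: a field 'k (instantiated with real or complex) with an involution cj
 (id for real, cnj for complex).\<close>

definition adjm :: "('k \<Rightarrow> 'k) \<Rightarrow> 'k mat \<Rightarrow> 'k mat" where
  "adjm cj A = mat (dim_col A) (dim_row A) (\<lambda>(i,j). cj (A $$ (j,i)))"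

definition vnorm :: "'k::real_normed_field vec \<Rightarrow> real" where
  "vnorm v = sqrt (\<Sum>i<dim_vec v. (norm (v $ i))\<^sup>2)"

definition opnorm :: "'k::real_normed_field mat \<Rightarrow> real" where
  "opnorm A = Sup {vnorm (A *\<^sub>v v) | v. v \<in> carrier_vec (dim_col A) \<and> vnorm v \<le> 1}"

definition psd_mat :: "('k::real_normed_field \<Rightarrow> 'k) \<Rightarrow> nat \<Rightarrow> 'k mat \<Rightarrow> bool" where
  "psd_mat cj n A \<longleftrightarrow> A \<in> carrier_mat n n \<and> adjm cj A = A \<and>
     (\<forall>v \<in> carrier_vec n. \<exists>r::real. r \<ge> 0 \<and>
        (\<Sum>i<n. cj (v $ i) * (A *\<^sub>v v) $ i) = of_real r)"

definition isometry_mat :: "('k::real_normed_field \<Rightarrow> 'k) \<Rightarrow> nat \<Rightarrow> nat \<Rightarrow> 'k mat \<Rightarrow> bool" where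
  "isometry_mat cj n m a \<longleftrightarrow> a \<in> carrier_mat n m \<and> adjm cj a * a = 1\<^sub>m m"

definition mstar :: "('e \<Rightarrow> 'e) \<Rightarrow> 'e mat \<Rightarrow> 'e mat" where
  "mstar sinv X = mat (dim_col X) (dim_row X) (\<lambda>(i,j). sinv (X $$ (j,i)))"

definition lmul :: "('k \<Rightarrow> 'e::comm_monoid_add \<Rightarrow> 'e) \<Rightarrow> 'k mat \<Rightarrow> 'e mat \<Rightarrow> 'e mat" where
  "lmul scale A X = mat (dim_row A) (dim_col X)
     (\<lambda>(i,j). \<Sum>p<dim_col A. scale (A $$ (i,p)) (X $$ (p,j)))"

definition rmul :: "('k \<Rightarrow> 'e::comm_monoid_add \<Rightarrow> 'e) \<Rightarrow> 'e mat \<Rightarrow> 'k mat \<Rightarrow> 'e mat" where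
  "rmul scale X B = mat (dim_row X) (dim_col B)
     (\<lambda>(i,j). \<Sum>q<dim_row B. scale (B $$ (q,j)) (X $$ (i,q)))"

definition bimul :: "('k \<Rightarrow> 'e::comm_monoid_add \<Rightarrow> 'e) \<Rightarrow> 'k mat \<Rightarrow> 'e mat \<Rightarrow> 'k mat \<Rightarrow> 'e mat" where
  "bimul scale A X B = rmul scale (lmul scale A X) B"

definition compress :: "('k \<Rightarrow> 'e::comm_monoid_add \<Rightarrow> 'e) \<Rightarrow> ('k \<Rightarrow> 'k) \<Rightarrow> 'k mat \<Rightarrow> 'e mat \<Rightarrow> 'e mat" where
  "compress scale cj A X = bimul scale (adjm cj A) X A"

definition msmul :: "('k \<Rightarrow> 'e \<Rightarrow> 'e) \<Rightarrow> 'k \<Rightarrow> 'e mat \<Rightarrow> 'e mat" where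
  "msmul scale c X = map_mat (scale c) X"

definition dsum :: "'e::zero mat \<Rightarrow> 'e mat \<Rightarrow> 'e mat" where
  "dsum X Y = four_block_mat X (0\<^sub>m (dim_row X) (dim_col Y)) (0\<^sub>m (dim_row Y) (dim_col X)) Y"

definition sa_mats :: "('e \<Rightarrow> 'e) \<Rightarrow> nat \<Rightarrow> 'e mat set" where
  "sa_mats sinv n = {X \<in> carrier_mat n n. mstar sinv X = X}"

definition m1 :: "'e \<Rightarrow> 'e mat" where
  "m1 x = mat 1 1 (\<lambda>_. x)"

definition star_vector_space ::
  "('k::field \<Rightarrow> 'e::ab_group_add \<Rightarrow> 'e) \<Rightarrow> ('k \<Rightarrow> 'k) \<Rightarrow> ('e \<Rightarrow> 'e) \<Rightarrow> bool" where
  "star_vector_space scale cj sinv \<longleftrightarrow> vector_space scale \<and>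
     (\<forall>x. sinv (sinv x) = x) \<and> (\<forall>x y. sinv (x + y) = sinv x + sinv y) \<and>
     (\<forall>c x. sinv (scale c x) = scale (cj c) (sinv x))"

definition matrix_normed ::
  "('k::real_normed_field \<Rightarrow> 'e::ab_group_add \<Rightarrow> 'e) \<Rightarrow> (nat \<Rightarrow> 'e mat \<Rightarrow> real) \<Rightarrow> bool" where
  "matrix_normed scale nrm \<longleftrightarrow> (\<forall>n>0.
     (\<forall>X \<in> carrier_mat n n. nrm n X \<ge> 0 \<and> (nrm n X = 0 \<longleftrightarrow> X = 0\<^sub>m n n)) \<and>
     (\<forall>X \<in> carrier_mat n n. \<forall>Y \<in> carrier_mat n n. nrm n (X + Y) \<le> nrm n X + nrm n Y) \<and>
     (\<forall>X \<in> carrier_mat n n. \<forall>c. nrm n (msmul scale c X) = norm c * nrm n X))"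

definition operator_space ::
  "('k::real_normed_field \<Rightarrow> 'e::ab_group_add \<Rightarrow> 'e) \<Rightarrow> (nat \<Rightarrow> 'e mat \<Rightarrow> real) \<Rightarrow> bool" where
  "operator_space scale nrm \<longleftrightarrow> matrix_normed scale nrm \<and>
     (\<forall>n>0. \<forall>m>0. \<forall>A \<in> carrier_mat m n. \<forall>X \<in> carrier_mat n n. \<forall>B \<in> carrier_mat n m.
        nrm m (bimul scale A X B) \<le> opnorm A * nrm n X * opnorm B) \<and>
     (\<forall>n>0. \<forall>m>0. \<forall>X \<in> carrier_mat n n. \<forall>Y \<in> carrier_mat m m.
        nrm (n + m) (dsum X Y) = max (nrm n X) (nrm m Y))"

definition closed_in_nrm :: "(nat \<Rightarrow> 'e::ab_group_add mat \<Rightarrow> real) \<Rightarrow> nat \<Rightarrow> 'e mat set \<Rightarrow> bool" where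
  "closed_in_nrm nrm n S \<longleftrightarrow> (\<forall>s X. (\<forall>k. s k \<in> S) \<and> X \<in> carrier_mat n n \<and>
      (\<lambda>k. nrm n (s k - X)) \<longlonglongrightarrow> 0 \<longrightarrow> X \<in> S)"

definition matrix_ordered ::
  "('k::real_normed_field \<Rightarrow> 'e::ab_group_add \<Rightarrow> 'e) \<Rightarrow> ('k \<Rightarrow> 'k) \<Rightarrow> ('e \<Rightarrow> 'e)
     \<Rightarrow> (nat \<Rightarrow> 'e mat set) \<Rightarrow> bool" where
  "matrix_ordered scale cj sinv pos \<longleftrightarrow>
     (\<forall>n>0. pos n \<subseteq> sa_mats sinv n \<and>
        (\<forall>X \<in> pos n. \<forall>Y \<in> pos n. X + Y \<in> pos n) \<and>
        (\<forall>X \<in> pos n. \<forall>r::real. r \<ge> 0 \<longrightarrow> msmul scale (of_real r) X \<in> pos n) \<and>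
        (\<forall>X \<in> pos n. - X \<in> pos n \<longrightarrow> X = 0\<^sub>m n n)) \<and>
     (\<forall>n>0. \<forall>m>0. \<forall>A \<in> carrier_mat n m. \<forall>X \<in> pos n. compress scale cj A X \<in> pos m)"

definition matrix_convex ::
  "('k::real_normed_field \<Rightarrow> 'e::ab_group_add \<Rightarrow> 'e) \<Rightarrow> ('k \<Rightarrow> 'k) \<Rightarrow> (nat \<Rightarrow> 'e mat set) \<Rightarrow> bool" where
  "matrix_convex scale cj K \<longleftrightarrow>
     (\<forall>n>0. K n \<subseteq> carrier_mat n n) \<and>
     (\<forall>n>0. \<forall>m>0. \<forall>X \<in> K n. \<forall>Y \<in> K m. dsum X Y \<in> K (n + m)) \<and>
     (\<forall>n>0. \<forall>m>0. \<forall>a X. isometry_mat cj n m a \<and> X \<in> K n \<longrightarrow> compress scale cj a X \<in> K m)"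

definition nc_base_norm_space ::
  "('k::real_normed_field \<Rightarrow> 'e::ab_group_add \<Rightarrow> 'e) \<Rightarrow> ('k \<Rightarrow> 'k) \<Rightarrow> ('e \<Rightarrow> 'e)
    \<Rightarrow> (nat \<Rightarrow> 'e mat \<Rightarrow> real) \<Rightarrow> (nat \<Rightarrow> 'e mat set) \<Rightarrow> (nat \<Rightarrow> 'e mat set)
    \<Rightarrow> ('e \<Rightarrow> 'k) \<Rightarrow> bool" where
  "nc_base_norm_space scale cj sinv nrm pos K f \<longleftrightarrow>
     star_vector_space scale cj sinv \<and>
     matrix_ordered scale cj sinv pos \<and>
     operator_space scale nrm \<and>
     (\<forall>n>0. closed_in_nrm nrm n (pos n)) \<and>
     (\<forall>n>0. \<forall>X \<in> carrier_mat n n. nrm n (mstar sinv X) = nrm n X) \<and>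
     matrix_convex scale cj K \<and>
     \<comment> \<open>(i)\<close>
     (\<forall>n>0. K n \<subseteq> pos n \<and> (\<forall>X \<in> K n. nrm n X \<le> 1)) \<and>
     \<comment> \<open>(ii)\<close>
     (\<forall>n>0. closed_in_nrm nrm n (K n)) \<and>
     \<comment> \<open>(iii)\<close>
     (\<forall>t::real. t > 1 \<longrightarrow> (\<forall>n>0. \<forall>X \<in> sa_mats sinv n. nrm n X \<le> 1 \<longrightarrow>
        (\<exists>c1 c2 X1 X2. psd_mat cj n c1 \<and> psd_mat cj n c2 \<and>
           psd_mat cj n (of_real t \<cdot>\<^sub>m 1\<^sub>m n - (c1 * c1 + c2 * c2)) \<and>
           X1 \<in> K n \<and> X2 \<in> K n \<and>
           X = bimul scale c1 X1 c1 - bimul scale c2 X2 c2))) \<and>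
     \<comment> \<open>(iv): f continuous, linear, positive (and selfadjoint)\<close>
     (\<forall>x y. f (x + y) = f x + f y) \<and> (\<forall>c x. f (scale c x) = c * f x) \<and>
     (\<exists>C. \<forall>x. norm (f x) \<le> C * nrm 1 (m1 x)) \<and>
     (\<forall>x. m1 x \<in> pos 1 \<longrightarrow> (\<exists>r::real. r \<ge> 0 \<and> f x = of_real r)) \<and>
     (\<forall>x. f (sinv x) = cj (f x)) \<and>
     (\<forall>n>0. K n = {X \<in> pos n. map_mat f X = 1\<^sub>m n})"

definition lemma4p3_conclusion ::
  "('k::real_normed_field \<Rightarrow> 'e::ab_group_add \<Rightarrow> 'e) \<Rightarrow> ('k \<Rightarrow> 'k) \<Rightarrow> ('e \<Rightarrow> 'e)
    \<Rightarrow> (nat \<Rightarrow> 'e mat \<Rightarrow> real) \<Rightarrow> (nat \<Rightarrow> 'e mat set) \<Rightarrow> (nat \<Rightarrow> 'e mat set)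
    \<Rightarrow> ('e \<Rightarrow> 'k) \<Rightarrow> bool" where
  "lemma4p3_conclusion scale cj sinv nrm pos K f \<longleftrightarrow> (\<forall>n>0.
     (\<forall>X \<in> sa_mats sinv n. nrm n X =
        Inf {opnorm (adjm cj a1 * a1 + adjm cj a2 * a2) | a1 a2 X1 X2.
               a1 \<in> carrier_mat n n \<and> a2 \<in> carrier_mat n n \<and> X1 \<in> K n \<and> X2 \<in> K n \<and>
               X = compress scale cj a1 X1 - compress scale cj a2 X2}) \<and>
     (\<forall>X \<in> pos n. nrm n X = opnorm (map_mat f X)) \<and>
     K n = {X \<in> pos n. map_mat f X = 1\<^sub>m n})"

end

theory Submission
  imports Defs "HOL-Analysis.L2_Norm" "Jordan_Normal_Form.Determinant"
begin

text \<open>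
  For selfadjoint \<open>x\<close> with \<open>r = \<parallel>x\<parallel>\<^sub>n\<close>, axiom (iii) applied to \<open>x / r\<close> gives
  \<open>x = r (c\<^sub>1 x\<^sub>1 c\<^sub>1 - c\<^sub>2 x\<^sub>2 c\<^sub>2)\<close> with \<open>x\<^sub>i \<in> K\<^sub>n\<close> and \<open>c\<^sub>1\<^sup>2 + c\<^sub>2\<^sup>2 \<le> t\<close> for any \<open>t > 1\<close>,
  so \<open>a\<^sub>i = \<surd>r c\<^sub>i\<close> is admissible with \<open>\<parallel>a\<^sub>1\<^sup>* a\<^sub>1 + a\<^sub>2\<^sup>* a\<^sub>2\<parallel> \<le> r t\<close>. Conversely, an admissible
  \<open>x = a\<^sub>1\<^sup>* x\<^sub>1 a\<^sub>1 - a\<^sub>2\<^sup>* x\<^sub>2 a\<^sub>2\<close> is the compression of \<open>x\<^sub>1 \<oplus> -x\<^sub>2\<close> by the column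
  \<open>S = [a\<^sub>1; a\<^sub>2]\<close>, and Ruan's axioms give \<open>\<parallel>x\<parallel> \<le> \<parallel>S\<parallel>\<^sup>2 \<le> \<parallel>S\<^sup>* S\<parallel> = \<parallel>a\<^sub>1\<^sup>* a\<^sub>1 + a\<^sub>2\<^sup>* a\<^sub>2\<parallel>\<close>.

  Since \<open>f\<^sub>1\<close> maps \<open>K\<^sub>n\<close> to the identity, the first decomposition gives
  \<open>f\<^sub>1(x) = r (c\<^sub>1\<^sup>2 - c\<^sub>2\<^sup>2)\<close>, hence \<open>\<parallel>f\<^sub>1(x)\<parallel> \<le> \<parallel>x\<parallel>\<close>. For positive \<open>x\<close> and \<open>k \<in> K\<^sub>n\<close>,
  \<open>f\<^sub>1(x + \<epsilon> k) = f\<^sub>1(x) + \<epsilon> I\<close> is positive definite, hence congruent to \<open>I\<close> by some \<open>b\<close>;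
  then \<open>b\<^sup>* (x + \<epsilon> k) b \<in> K\<^sub>n\<close>, and \<open>x + \<epsilon> k\<close> is its compression by \<open>b\<^sup>-\<^sup>1\<close>, so that
  \<open>\<parallel>x + \<epsilon> k\<parallel> \<le> \<parallel>f\<^sub>1(x + \<epsilon> k)\<parallel> \<le> \<parallel>f\<^sub>1(x)\<parallel> + \<epsilon>\<close>.
\<close>

lemma sum_lessThan_add:
  "(\<Sum>i<n + m. g i) = (\<Sum>i<n. g i) + (\<Sum>i<m. g (n + i))" for n m :: nat
  by (induct m) (simp_all add: add.assoc)

lemma le_of_le_mult_gt_one:
  fixes x r :: real
  assumes "\<And>t. t > 1 \<Longrightarrow> x \<le> r * t"
  shows "x \<le> r"
proof (rule field_le_mult_one_interval)
  fix z :: real assume z: "0 < z" "z < 1"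
  have "x \<le> r * (1 / z)" using assms[of "1 / z"] z by simp
  thus "z * x \<le> r" using z by (simp add: field_simps)
qed

lemma mult_mat_vec_zero[simp]: "A *\<^sub>v 0\<^sub>v (dim_col A) = 0\<^sub>v (dim_row A)"
  by (intro eq_vecI) auto

lemma scalar_prod_row:
  "dim_vec v = dim_col A \<Longrightarrow> i < dim_row A \<Longrightarrow> row A i \<bullet> v = (\<Sum>j<dim_vec v. A $$ (i,j) * v $ j)"
  by (auto simp: scalar_prod_def atLeast0LessThan intro!: sum.cong)

lemma smult_mat_mult_vec: "dim_vec v = dim_col A \<Longrightarrow> (c \<cdot>\<^sub>m A) *\<^sub>v v = c \<cdot>\<^sub>v (A *\<^sub>v v)"
  by (intro eq_vecI) (auto simp: scalar_prod_def sum_distrib_left ac_simps)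

lemma scalar_prod_row_col:
  "A \<in> carrier_mat m p \<Longrightarrow> C \<in> carrier_mat p q \<Longrightarrow> i < m \<Longrightarrow> j < q \<Longrightarrow>
    row A i \<bullet> col C j = (\<Sum>k<p. A $$ (i,k) * C $$ (k,j))"
  by (simp add: scalar_prod_def atLeast0LessThan)

lemma mult_mat_index:
  "A \<in> carrier_mat m p \<Longrightarrow> C \<in> carrier_mat p q \<Longrightarrow> i < m \<Longrightarrow> j < q \<Longrightarrow>
    (A * C) $$ (i,j) = (\<Sum>k<p. A $$ (i,k) * C $$ (k,j))"
  by (simp add: scalar_prod_row_col)

lemma dsum_carrier[simp]:
  "A \<in> carrier_mat n n \<Longrightarrow> C \<in> carrier_mat m m \<Longrightarrow> dsum A C \<in> carrier_mat (n + m) (n + m)"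
  unfolding dsum_def by simp

lemma dsum_eq_four_block_mat:
  "A \<in> carrier_mat n n \<Longrightarrow> C \<in> carrier_mat m m \<Longrightarrow>
    dsum A C = four_block_mat A (0\<^sub>m n m) (0\<^sub>m m n) C"
  unfolding dsum_def by auto

lemma dsum_mult:
  fixes A C :: "'a::semiring_0 mat"
  assumes "A \<in> carrier_mat n n" "A' \<in> carrier_mat n n" "C \<in> carrier_mat m m" "C' \<in> carrier_mat m m"
  shows "dsum A C * dsum A' C' = dsum (A * A') (C * C')"
proof -
  have "dsum A C * dsum A' C' = four_block_mat (A * A') (0\<^sub>m n m) (0\<^sub>m m n) (C * C')"
    using assms
    by (simp add: dsum_eq_four_block_mat mult_four_block_mat[OF assms(1) zero_carrier_mat
          zero_carrier_mat assms(3) assms(2) zero_carrier_mat zero_carrier_mat assms(4)])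
  also have "\<dots> = dsum (A * A') (C * C')"
    using dsum_eq_four_block_mat[OF mult_carrier_mat[OF assms(1,2)] mult_carrier_mat[OF assms(3,4)]]
    by simp
  finally show ?thesis .
qed

lemma unit_upper_block_mult:
  fixes X Y :: "'a::semiring_1 mat"
  assumes "X \<in> carrier_mat k m" "Y \<in> carrier_mat k m"
  shows "four_block_mat (1\<^sub>m k) X (0\<^sub>m m k) (1\<^sub>m m) * four_block_mat (1\<^sub>m k) Y (0\<^sub>m m k) (1\<^sub>m m)
    = four_block_mat (1\<^sub>m k) (Y + X) (0\<^sub>m m k) (1\<^sub>m m)"
  using assms
  by (simp add: mult_four_block_mat[OF one_carrier_mat assms(1) zero_carrier_mat one_carrier_mat
        one_carrier_mat assms(2) zero_carrier_mat one_carrier_mat])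

lemma unit_upper_block_mult_vec_neq_zero:
  fixes X :: "'a::ring_1 mat"
  assumes X: "X \<in> carrier_mat k m" and v: "v \<in> carrier_vec (k + m)" "v \<noteq> 0\<^sub>v (k + m)"
  shows "four_block_mat (1\<^sub>m k) X (0\<^sub>m m k) (1\<^sub>m m) *\<^sub>v v \<noteq> 0\<^sub>v (k + m)"
proof
  let ?L = "four_block_mat (1\<^sub>m k) X (0\<^sub>m m k) (1\<^sub>m m)"
  let ?L' = "four_block_mat (1\<^sub>m k) (- X) (0\<^sub>m m k) (1\<^sub>m m)"
  have L: "?L \<in> carrier_mat (k + m) (k + m)" and L': "?L' \<in> carrier_mat (k + m) (k + m)"
    by simp_all
  have "X + - X = 0\<^sub>m k m"
    using X by (intro eq_matI) auto
  then have "?L' * ?L = 1\<^sub>m (k + m)"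
    unfolding unit_upper_block_mult[OF uminus_carrier_mat[OF X] X] by simp
  assume Lv: "?L *\<^sub>v v = 0\<^sub>v (k + m)"
  have "v = (?L' * ?L) *\<^sub>v v" using v(1) by (simp add: \<open>?L' * ?L = _\<close>)
  also have "\<dots> = ?L' *\<^sub>v 0\<^sub>v (k + m)"
    unfolding assoc_mult_mat_vec[OF L' L v(1)] Lv ..
  also have "\<dots> = 0\<^sub>v (k + m)"
    using L' by (intro eq_vecI) auto
  finally show False using v(2) by simp
qed

section \<open>Matrices over a normed field with an involution\<close>

locale normed_involution =
  fixes cj :: "'k::real_normed_field \<Rightarrow> 'k"
  assumes cj_add: "cj (a + b) = cj a + cj b"
    and cj_mult: "cj (a * b) = cj a * cj b"
    and cj_cj[simp]: "cj (cj a) = a"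
    and cj_of_real[simp]: "cj (of_real r) = of_real r"
    and cj_mult_self: "cj a * a = of_real ((norm a)\<^sup>2)"
begin

lemma cj_0[simp]: "cj 0 = 0"
  using cj_of_real[of 0] by simp

lemma cj_1[simp]: "cj 1 = 1"
  using cj_of_real[of 1] by simp

lemma cj_minus: "cj (- a) = - cj a"
  using cj_add[of a "- a"] by (simp add: eq_neg_iff_add_eq_0 add.commute)

lemma cj_diff: "cj (a - b) = cj a - cj b"
  using cj_add[of a "- b"] cj_minus[of b] by simp

lemma cj_sum: "cj (sum g A) = (\<Sum>i\<in>A. cj (g i))"
  by (induct A rule: infinite_finite_induct) (auto simp: cj_add)

lemma cj_inverse: "cj (inverse a) = inverse (cj a)"
proof (cases "a = 0")
  case False
  then have "cj a * cj (inverse a) = 1"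
    using cj_mult[of a "inverse a"] cj_of_real[of 1] by simp
  then show ?thesis by (rule inverse_unique[symmetric])
qed simp

lemma norm_cj[simp]: "norm (cj a) = norm a"
proof -
  have "(of_real ((norm (cj a))\<^sup>2) :: 'k) = of_real ((norm a)\<^sup>2)"
    using cj_mult_self[of "cj a"] cj_mult_self[of a] by (simp add: mult.commute)
  then have "(norm (cj a))\<^sup>2 = (norm a)\<^sup>2" by (simp only: of_real_eq_iff)
  then show ?thesis by (simp add: power2_eq_iff_nonneg)
qed

definition vinner :: "'k vec \<Rightarrow> 'k vec \<Rightarrow> 'k" where
  "vinner u v = (\<Sum>i<dim_vec u. cj (u $ i) * v $ i)"

lemma vnorm_eq_L2_set: "vnorm v = L2_set (\<lambda>i. norm (v $ i)) {..<dim_vec v}"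
  by (simp add: vnorm_def L2_set_def)

lemma vnorm_nonneg[simp]: "vnorm v \<ge> 0"
  by (simp add: vnorm_eq_L2_set)

lemma vnorm_power2: "(vnorm v)\<^sup>2 = (\<Sum>i<dim_vec v. (norm (v $ i))\<^sup>2)"
  unfolding vnorm_def by (simp add: sum_nonneg)

lemma vinner_self: "vinner v v = of_real ((vnorm v)\<^sup>2)"
  unfolding vinner_def vnorm_power2 by (simp add: cj_mult_self)

lemma vnorm_power2_eq_norm_vinner: "(vnorm v)\<^sup>2 = norm (vinner v v)"
  by (simp add: vinner_self norm_power)

lemma norm_vinner_le:
  assumes "dim_vec v = dim_vec u"
  shows "norm (vinner u v) \<le> vnorm u * vnorm v"
proof -
  have "norm (vinner u v) \<le> (\<Sum>i<dim_vec u. norm (cj (u $ i) * v $ i))"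
    unfolding vinner_def by (rule norm_sum)
  also have "\<dots> = (\<Sum>i<dim_vec u. \<bar>norm (u $ i)\<bar> * \<bar>norm (v $ i)\<bar>)"
    by (simp add: norm_mult)
  also have "\<dots> \<le> L2_set (\<lambda>i. norm (u $ i)) {..<dim_vec u} * L2_set (\<lambda>i. norm (v $ i)) {..<dim_vec u}"
    by (rule L2_set_mult_ineq)
  finally show ?thesis using assms by (simp add: vnorm_eq_L2_set)
qed

lemma norm_index_le_vnorm: "i < dim_vec v \<Longrightarrow> norm (v $ i) \<le> vnorm v"
  unfolding vnorm_eq_L2_set by (rule member_le_L2_set) auto

lemma vnorm_le_sum_norm: "vnorm v \<le> (\<Sum>i<dim_vec v. norm (v $ i))"
  unfolding vnorm_eq_L2_set by (rule L2_set_le_sum) auto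

lemma vnorm_smult: "vnorm (c \<cdot>\<^sub>v v) = norm c * vnorm v"
proof -
  have "(vnorm (c \<cdot>\<^sub>v v))\<^sup>2 = (norm c * vnorm v)\<^sup>2"
    unfolding vnorm_power2 power_mult_distrib
    by (simp add: sum_distrib_left norm_mult power_mult_distrib)
  then show ?thesis by (simp add: power2_eq_iff_nonneg)
qed

lemma vnorm_add_le:
  assumes "dim_vec v = dim_vec u"
  shows "vnorm (u + v) \<le> vnorm u + vnorm v"
proof -
  have "vnorm (u + v) \<le> L2_set (\<lambda>i. norm (u $ i) + norm (v $ i)) {..<dim_vec u}"
    unfolding vnorm_eq_L2_set using assms by (auto intro!: L2_set_mono norm_triangle_ineq)
  also have "\<dots> \<le> vnorm u + vnorm v"
    unfolding vnorm_eq_L2_set assms by (rule L2_set_triangle_ineq)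
  finally show ?thesis .
qed

lemma vnorm_zero[simp]: "vnorm (0\<^sub>v n) = 0"
  by (simp add: vnorm_def)

lemma vnorm_eq_0_iff: "vnorm v = 0 \<longleftrightarrow> v = 0\<^sub>v (dim_vec v)"
  by (auto simp: vnorm_eq_L2_set L2_set_eq_0_iff vec_eq_iff)

lemma vinner_add_right:
  "dim_vec v = dim_vec u \<Longrightarrow> dim_vec w = dim_vec u \<Longrightarrow> vinner u (v + w) = vinner u v + vinner u w"
  unfolding vinner_def by (simp add: distrib_left sum.distrib)

lemma vinner_diff_right:
  "dim_vec v = dim_vec u \<Longrightarrow> dim_vec w = dim_vec u \<Longrightarrow> vinner u (v - w) = vinner u v - vinner u w"
  unfolding vinner_def by (simp add: right_diff_distrib sum_subtractf)

lemma vinner_add_left: "dim_vec w = dim_vec u \<Longrightarrow> vinner (u + w) v = vinner u v + vinner w v"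
  unfolding vinner_def by (simp add: cj_add distrib_right sum.distrib)

lemma vinner_diff_left: "dim_vec w = dim_vec u \<Longrightarrow> vinner (u - w) v = vinner u v - vinner w v"
  unfolding vinner_def by (simp add: cj_diff left_diff_distrib sum_subtractf)

lemma vinner_smult_right: "dim_vec v = dim_vec u \<Longrightarrow> vinner u (c \<cdot>\<^sub>v v) = c * vinner u v"
  unfolding vinner_def by (simp add: sum_distrib_left ac_simps)

lemma vinner_smult_left: "vinner (c \<cdot>\<^sub>v u) v = cj c * vinner u v"
  unfolding vinner_def by (simp add: sum_distrib_left ac_simps cj_mult)

lemma vinner_append:
  "dim_vec x1 = dim_vec x2 \<Longrightarrow> dim_vec y1 = dim_vec y2 \<Longrightarrow>
    vinner (x1 @\<^sub>v y1) (x2 @\<^sub>v y2) = vinner x1 x2 + vinner y1 y2"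
  unfolding vinner_def by (simp add: sum_lessThan_add)

lemma vinner_zero_left[simp]: "vinner (0\<^sub>v n) v = 0"
  by (simp add: vinner_def)

lemma vnorm_parallelogram:
  fixes u v :: "'k vec"
  assumes "u \<in> carrier_vec n" "v \<in> carrier_vec n"
  shows "(vnorm (u + v))\<^sup>2 + (vnorm (u - v))\<^sup>2 = 2 * ((vnorm u)\<^sup>2 + (vnorm v)\<^sup>2)"
proof -
  have "vinner (u + v) (u + v) + vinner (u - v) (u - v) = 2 * (vinner u u + vinner v v)"
    using assms by (simp add: vinner_add_left vinner_diff_left vinner_add_right vinner_diff_right
        algebra_simps)
  then have "(of_real ((vnorm (u + v))\<^sup>2 + (vnorm (u - v))\<^sup>2) :: 'k) =
      of_real (2 * ((vnorm u)\<^sup>2 + (vnorm v)\<^sup>2))"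
    by (simp only: vinner_self of_real_add of_real_mult of_real_numeral)
  then show ?thesis by (simp only: of_real_eq_iff)
qed

lemma adjm_dims[simp]: "dim_row (adjm cj A) = dim_col A" "dim_col (adjm cj A) = dim_row A"
  by (simp_all add: adjm_def)

lemma adjm_index[simp]: "i < dim_col A \<Longrightarrow> j < dim_row A \<Longrightarrow> adjm cj A $$ (i,j) = cj (A $$ (j,i))"
  by (simp add: adjm_def)

lemma adjm_carrier[simp]: "A \<in> carrier_mat m n \<Longrightarrow> adjm cj A \<in> carrier_mat n m"
  by (intro carrier_matI) auto

lemma adjm_adjm[simp]: "adjm cj (adjm cj A) = A"
  by (intro eq_matI) auto

lemma adjm_mult:
  "A \<in> carrier_mat m n \<Longrightarrow> B \<in> carrier_mat n p \<Longrightarrow> adjm cj (A * B) = adjm cj B * adjm cj A"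
  by (intro eq_matI) (auto simp: scalar_prod_def cj_sum cj_mult ac_simps)

lemma adjm_add:
  "A \<in> carrier_mat m n \<Longrightarrow> B \<in> carrier_mat m n \<Longrightarrow> adjm cj (A + B) = adjm cj A + adjm cj B"
  by (intro eq_matI) (auto simp: cj_add)

lemma adjm_diff:
  "A \<in> carrier_mat m n \<Longrightarrow> B \<in> carrier_mat m n \<Longrightarrow> adjm cj (A - B) = adjm cj A - adjm cj B"
  by (intro eq_matI) (auto simp: cj_diff)

lemma adjm_smult: "adjm cj (c \<cdot>\<^sub>m A) = cj c \<cdot>\<^sub>m adjm cj A"
  by (intro eq_matI) (auto simp: cj_mult)

lemma adjm_one[simp]: "adjm cj (1\<^sub>m n) = 1\<^sub>m n"
  using cj_of_real[of 1] by (intro eq_matI) auto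

lemma adjm_zero[simp]: "adjm cj (0\<^sub>m n m) = 0\<^sub>m m n"
  by (intro eq_matI) auto

lemma adjm_four_block_mat:
  assumes "A \<in> carrier_mat n1 k1" "B \<in> carrier_mat n1 k2" "C \<in> carrier_mat n2 k1" "D \<in> carrier_mat n2 k2"
  shows "adjm cj (four_block_mat A B C D) =
    four_block_mat (adjm cj A) (adjm cj C) (adjm cj B) (adjm cj D)"
  using assms by (intro eq_matI) auto

lemma gram_smult:
  "c \<in> carrier_mat n m \<Longrightarrow> adjm cj (s \<cdot>\<^sub>m c) * (s \<cdot>\<^sub>m c) = (cj s * s) \<cdot>\<^sub>m (adjm cj c * c)"
  by (simp add: adjm_smult mult_smult_assoc_mat[of _ m n] mult_smult_distrib[of _ m n])
    (intro eq_matI, auto)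

lemma vinner_adjm:
  assumes A: "A \<in> carrier_mat m n" and u: "u \<in> carrier_vec m" and v: "v \<in> carrier_vec n"
  shows "vinner u (A *\<^sub>v v) = vinner (adjm cj A *\<^sub>v u) v"
proof -
  have "vinner u (A *\<^sub>v v) = (\<Sum>i<m. \<Sum>j<n. cj (u $ i) * (A $$ (i,j) * v $ j))"
    using A u v unfolding vinner_def by (simp add: scalar_prod_row sum_distrib_left)
  also have "\<dots> = (\<Sum>j<n. \<Sum>i<m. cj (u $ i) * (A $$ (i,j) * v $ j))"
    by (rule sum.swap)
  also have "\<dots> = (\<Sum>j<n. (\<Sum>i<m. cj (u $ i) * A $$ (i,j)) * v $ j)"
    by (simp add: sum_distrib_right mult.assoc)
  also have "\<dots> = (\<Sum>j<n. cj (\<Sum>i<m. cj (A $$ (i,j)) * u $ i) * v $ j)"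
    by (simp add: cj_sum cj_mult mult.commute)
  also have "\<dots> = vinner (adjm cj A *\<^sub>v u) v"
    using A u unfolding vinner_def by (simp add: scalar_prod_row)
  finally show ?thesis .
qed

lemma vnorm_mult_mat_vec_le_sum:
  assumes v: "v \<in> carrier_vec (dim_col A)"
  shows "vnorm (A *\<^sub>v v) \<le> (\<Sum>i<dim_row A. \<Sum>j<dim_col A. norm (A $$ (i,j))) * vnorm v"
proof -
  have "vnorm (A *\<^sub>v v) \<le> (\<Sum>i<dim_row A. norm ((A *\<^sub>v v) $ i))"
    using vnorm_le_sum_norm[of "A *\<^sub>v v"] by simp
  also have "\<dots> \<le> (\<Sum>i<dim_row A. \<Sum>j<dim_col A. norm (A $$ (i,j)) * vnorm v)"
  proof (rule sum_mono)
    fix i assume i: "i \<in> {..<dim_row A}"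
    have "norm ((A *\<^sub>v v) $ i) \<le> (\<Sum>j<dim_col A. norm (A $$ (i,j) * v $ j))"
      using i v by (simp add: scalar_prod_row norm_sum)
    also have "\<dots> \<le> (\<Sum>j<dim_col A. norm (A $$ (i,j)) * vnorm v)"
      using v by (auto simp: norm_mult intro!: sum_mono mult_left_mono norm_index_le_vnorm)
    finally show "norm ((A *\<^sub>v v) $ i) \<le> (\<Sum>j<dim_col A. norm (A $$ (i,j)) * vnorm v)" .
  qed
  also have "\<dots> = (\<Sum>i<dim_row A. \<Sum>j<dim_col A. norm (A $$ (i,j))) * vnorm v"
    by (simp add: sum_distrib_right)
  finally show ?thesis .
qed

lemma bdd_above_opnorm_set:
  "bdd_above {vnorm (A *\<^sub>v v) | v. v \<in> carrier_vec (dim_col A) \<and> vnorm v \<le> 1}"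
proof (rule bdd_aboveI)
  fix x assume "x \<in> {vnorm (A *\<^sub>v v) | v. v \<in> carrier_vec (dim_col A) \<and> vnorm v \<le> 1}"
  then obtain v where v: "v \<in> carrier_vec (dim_col A)" "vnorm v \<le> 1" and x: "x = vnorm (A *\<^sub>v v)"
    by auto
  have "0 \<le> (\<Sum>i<dim_row A. \<Sum>j<dim_col A. norm (A $$ (i,j)))"
    by (intro sum_nonneg) auto
  then show "x \<le> (\<Sum>i<dim_row A. \<Sum>j<dim_col A. norm (A $$ (i,j)))"
    using vnorm_mult_mat_vec_le_sum[OF v(1)] mult_left_mono[OF v(2)] x by force
qed

lemma opnorm_upper:
  "v \<in> carrier_vec (dim_col A) \<Longrightarrow> vnorm v \<le> 1 \<Longrightarrow> vnorm (A *\<^sub>v v) \<le> opnorm A"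
  unfolding opnorm_def by (rule cSup_upper[OF _ bdd_above_opnorm_set]) auto

lemma opnorm_nonneg: "opnorm A \<ge> 0"
  using opnorm_upper[of "0\<^sub>v (dim_col A)" A] vnorm_nonneg order_trans by fastforce

lemma opnorm_le:
  assumes "c \<ge> 0" and "\<And>v. v \<in> carrier_vec (dim_col A) \<Longrightarrow> vnorm (A *\<^sub>v v) \<le> c * vnorm v"
  shows "opnorm A \<le> c"
  unfolding opnorm_def
proof (rule cSup_least)
  show "{vnorm (A *\<^sub>v v) | v. v \<in> carrier_vec (dim_col A) \<and> vnorm v \<le> 1} \<noteq> {}"
    by (auto intro!: exI[of _ "0\<^sub>v (dim_col A)"])
  fix x assume "x \<in> {vnorm (A *\<^sub>v v) | v. v \<in> carrier_vec (dim_col A) \<and> vnorm v \<le> 1}"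
  then obtain v where v: "v \<in> carrier_vec (dim_col A)" "vnorm v \<le> 1" and x: "x = vnorm (A *\<^sub>v v)"
    by auto
  show "x \<le> c"
    using assms(2)[OF v(1)] mult_left_mono[OF v(2) assms(1)] x by simp
qed

lemma vnorm_mult_mat_vec_le:
  fixes A :: "'k mat"
  assumes v: "v \<in> carrier_vec (dim_col A)"
  shows "vnorm (A *\<^sub>v v) \<le> opnorm A * vnorm v"
proof (cases "vnorm v = 0")
  case True
  then have "v = 0\<^sub>v (dim_col A)"
    using v vnorm_eq_0_iff[of v] by auto
  then show ?thesis by simp
next
  case False
  then have pos: "vnorm v > 0" using vnorm_nonneg[of v] by linarith
  define c where "c = (of_real (inverse (vnorm v)) :: 'k)"
  have "vnorm (A *\<^sub>v (c \<cdot>\<^sub>v v)) \<le> opnorm A"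
    using v pos by (intro opnorm_upper) (auto simp: vnorm_smult c_def norm_inverse)
  moreover have "A *\<^sub>v (c \<cdot>\<^sub>v v) = c \<cdot>\<^sub>v (A *\<^sub>v v)"
    using v by (auto intro: mult_mat_vec)
  ultimately have "vnorm (A *\<^sub>v v) / vnorm v \<le> opnorm A"
    using pos by (simp add: vnorm_smult c_def norm_inverse divide_inverse_commute)
  then show ?thesis using pos by (simp add: pos_divide_le_eq)
qed

lemma opnorm_add_le:
  fixes A B :: "'k mat"
  assumes "A \<in> carrier_mat m n" "B \<in> carrier_mat m n"
  shows "opnorm (A + B) \<le> opnorm A + opnorm B"
proof (rule opnorm_le)
  fix v :: "'k vec" assume "v \<in> carrier_vec (dim_col (A + B))"
  then have v: "v \<in> carrier_vec n" using assms by simp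
  have "vnorm ((A + B) *\<^sub>v v) \<le> vnorm (A *\<^sub>v v) + vnorm (B *\<^sub>v v)"
    using assms v by (simp add: add_mult_distrib_mat_vec vnorm_add_le)
  also have "\<dots> \<le> opnorm A * vnorm v + opnorm B * vnorm v"
    using assms v by (intro add_mono vnorm_mult_mat_vec_le) auto
  finally show "vnorm ((A + B) *\<^sub>v v) \<le> (opnorm A + opnorm B) * vnorm v"
    by (simp add: distrib_right)
qed (simp add: opnorm_nonneg add_nonneg_nonneg)

lemma opnorm_smult_le: "opnorm (c \<cdot>\<^sub>m A) \<le> norm c * opnorm A" for A :: "'k mat"
proof (rule opnorm_le)
  fix v :: "'k vec" assume "v \<in> carrier_vec (dim_col (c \<cdot>\<^sub>m A))"
  then have v: "v \<in> carrier_vec (dim_col A)" by simp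
  have "(c \<cdot>\<^sub>m A) *\<^sub>v v = c \<cdot>\<^sub>v (A *\<^sub>v v)"
    using v by (simp add: smult_mat_mult_vec)
  then show "vnorm ((c \<cdot>\<^sub>m A) *\<^sub>v v) \<le> norm c * opnorm A * vnorm v"
    using vnorm_mult_mat_vec_le[OF v] by (simp add: vnorm_smult mult.assoc mult_left_mono)
qed (simp add: opnorm_nonneg)

lemma opnorm_one_le: "opnorm (1\<^sub>m n :: 'k mat) \<le> 1"
  by (rule opnorm_le) auto

lemma opnorm_add_smult_one_le:
  fixes A :: "'k mat"
  assumes "A \<in> carrier_mat n n"
  shows "opnorm (A + c \<cdot>\<^sub>m 1\<^sub>m n) \<le> opnorm A + norm c"
proof -
  have "opnorm (c \<cdot>\<^sub>m 1\<^sub>m n) \<le> norm c"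
    using opnorm_smult_le[of c "1\<^sub>m n"] opnorm_one_le[of n] by (simp add: order_trans mult_left_le)
  then show ?thesis
    using opnorm_add_le[OF assms smult_carrier_mat[OF one_carrier_mat, of c n]] by linarith
qed

lemma opnorm_adjm_le:
  assumes A: "A \<in> carrier_mat m n"
  shows "opnorm (adjm cj A) \<le> opnorm A"
proof (rule opnorm_le[OF opnorm_nonneg])
  fix w :: "'k vec" assume "w \<in> carrier_vec (dim_col (adjm cj A))"
  then have w: "w \<in> carrier_vec m" using A by simp
  define u where "u = adjm cj A *\<^sub>v w"
  have u: "u \<in> carrier_vec n" unfolding u_def by (rule mult_mat_vec_carrier[OF adjm_carrier[OF A] w])
  have "(vnorm u)\<^sup>2 = norm (vinner w (A *\<^sub>v u))"
    using vinner_adjm[OF A w u] by (simp add: u_def vnorm_power2_eq_norm_vinner)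
  also have "\<dots> \<le> vnorm w * (opnorm A * vnorm u)"
    using A w u norm_vinner_le[of "A *\<^sub>v u" w] vnorm_mult_mat_vec_le[of u A]
    by (force intro: order_trans mult_left_mono)
  finally have "vnorm u * vnorm u \<le> (opnorm A * vnorm w) * vnorm u"
    by (simp add: power2_eq_square ac_simps)
  then show "vnorm (adjm cj A *\<^sub>v w) \<le> opnorm A * vnorm w"
    unfolding u_def[symmetric]
    using opnorm_nonneg[of A] vnorm_nonneg[of w] vnorm_nonneg[of u]
    by (cases "vnorm u = 0") (auto simp: mult_le_cancel_right)
qed

lemma opnorm_power2_le_gram:
  assumes B: "B \<in> carrier_mat m n"
  shows "(opnorm B)\<^sup>2 \<le> opnorm (adjm cj B * B)"
proof -
  let ?C = "adjm cj B * B"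
  have "opnorm B \<le> sqrt (opnorm ?C)"
  proof (rule opnorm_le)
    fix v :: "'k vec" assume "v \<in> carrier_vec (dim_col B)"
    then have v: "v \<in> carrier_vec n" using B by simp
    have "(vnorm (B *\<^sub>v v))\<^sup>2 = norm (vinner (adjm cj B *\<^sub>v (B *\<^sub>v v)) v)"
      using vinner_adjm[OF B _ v, of "B *\<^sub>v v"] B v by (simp add: vnorm_power2_eq_norm_vinner)
    also have "\<dots> \<le> vnorm (?C *\<^sub>v v) * vnorm v"
      using B v by (simp add: assoc_mult_mat_vec[OF adjm_carrier[OF B] B v] norm_vinner_le)
    also have "\<dots> \<le> (opnorm ?C * vnorm v) * vnorm v"
      using B v by (intro mult_right_mono vnorm_mult_mat_vec_le) auto
    also have "\<dots> = (sqrt (opnorm ?C) * vnorm v)\<^sup>2"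
      using opnorm_nonneg[of ?C] by (simp add: power_mult_distrib power2_eq_square)
    finally show "vnorm (B *\<^sub>v v) \<le> sqrt (opnorm ?C) * vnorm v"
      using opnorm_nonneg[of ?C] by (simp add: power2_le_iff_abs_le)
  qed (simp add: opnorm_nonneg)
  then have "(opnorm B)\<^sup>2 \<le> (sqrt (opnorm ?C))\<^sup>2"
    using opnorm_nonneg[of B] by (simp add: power_mono)
  then show ?thesis using opnorm_nonneg[of ?C] by simp
qed

lemma vinner_polarization:
  assumes "H \<in> carrier_mat n n" "adjm cj H = H" "a \<in> carrier_vec n" "v \<in> carrier_vec n"
  shows "vinner (a + v) (H *\<^sub>v (a + v)) - vinner (a - v) (H *\<^sub>v (a - v))
    = 2 * (vinner a (H *\<^sub>v v) + vinner (H *\<^sub>v v) a)"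
proof -
  have "vinner v (H *\<^sub>v a) = vinner (H *\<^sub>v v) a"
    using vinner_adjm[of H n n v a] assms by simp
  then show ?thesis
    using assms
    by (simp add: mult_add_distrib_mat_vec mult_minus_distrib_mat_vec vinner_add_left vinner_diff_left
        vinner_add_right vinner_diff_right algebra_simps)
qed

lemma opnorm_selfadjoint_le:
  assumes H: "H \<in> carrier_mat n n" "adjm cj H = H" and s: "s \<ge> 0"
    and q: "\<And>v. v \<in> carrier_vec n \<Longrightarrow> norm (vinner v (H *\<^sub>v v)) \<le> s * (vnorm v)\<^sup>2"
  shows "opnorm H \<le> s"
proof (rule opnorm_le[OF s])
  fix v :: "'k vec" assume "v \<in> carrier_vec (dim_col H)"
  then have v: "v \<in> carrier_vec n" using H by simp
  define w where "w = H *\<^sub>v v"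
  have w: "w \<in> carrier_vec n" unfolding w_def using H v by simp
  show "vnorm (H *\<^sub>v v) \<le> s * vnorm v"
  proof (cases "vnorm w = 0")
    case True
    then show ?thesis using s unfolding w_def by simp
  next
    case False
    then have "v \<noteq> 0\<^sub>v n" using H(1) by (auto simp: w_def)
    then have vpos: "vnorm v > 0"
      using v vnorm_eq_0_iff[of v] vnorm_nonneg[of v] by (simp add: less_le)
    have wpos: "vnorm w > 0" using False vnorm_nonneg[of w] by linarith
    \<comment> \<open>test the quadratic form at \<open>a \<plusminus> v\<close>, where \<open>a\<close> points along \<open>H v\<close> and has the length of \<open>v\<close>\<close>
    define c where "c = vnorm v / vnorm w"
    have c: "c \<ge> 0" "c * vnorm w = vnorm v" "c * (vnorm w)\<^sup>2 = vnorm v * vnorm w"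
      using wpos by (simp_all add: c_def power2_eq_square)
    define a where "a = (of_real c :: 'k) \<cdot>\<^sub>v w"
    have a: "a \<in> carrier_vec n" unfolding a_def using w by simp
    have a_norm: "vnorm a = vnorm v"
      unfolding a_def vnorm_smult norm_of_real using c by simp
    have "vinner a w = of_real (vnorm v * vnorm w)" "vinner w a = of_real (vnorm v * vnorm w)"
      unfolding a_def
      by (simp_all only: vinner_smult_left vinner_smult_right index_smult_vec(2) cj_of_real vinner_self
          c(3) flip: of_real_mult)
    then have "4 * (vnorm v * vnorm w)
        = norm (vinner (a + v) (H *\<^sub>v (a + v)) - vinner (a - v) (H *\<^sub>v (a - v)))"
      using vinner_polarization[OF H a v] vpos wpos
      by (simp only: w_def[symmetric]) (simp add: norm_mult)
    also have "\<dots> \<le> s * (vnorm (a + v))\<^sup>2 + s * (vnorm (a - v))\<^sup>2"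
      using a v by (intro order_trans[OF norm_triangle_ineq4] add_mono q) auto
    also have "\<dots> = 4 * s * (vnorm v)\<^sup>2"
      using vnorm_parallelogram[OF a v] a_norm by (simp flip: distrib_left)
    also have "\<dots> = 4 * (vnorm v * (s * vnorm v))"
      by (simp add: power2_eq_square ac_simps)
    finally show ?thesis
      using vpos unfolding w_def by simp
  qed
qed

subsection \<open>Positive definite matrices are congruent to the identity\<close>

definition posdef_mat :: "nat \<Rightarrow> 'k mat \<Rightarrow> bool" where
  "posdef_mat n P \<longleftrightarrow> P \<in> carrier_mat n n \<and> adjm cj P = P \<and>
     (\<forall>v \<in> carrier_vec n. v \<noteq> 0\<^sub>v n \<longrightarrow> (\<exists>r>0. vinner v (P *\<^sub>v v) = of_real r))"

lemma adjm_dsum: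
  assumes "A \<in> carrier_mat n n" "C \<in> carrier_mat m m"
  shows "adjm cj (dsum A C) = dsum (adjm cj A) (adjm cj C)"
  using assms unfolding dsum_def by (intro eq_matI) auto

lemma dsum_congruence:
  assumes "a \<in> carrier_mat n n" "p \<in> carrier_mat n n" "c \<in> carrier_mat m m" "s \<in> carrier_mat m m"
  shows "adjm cj (dsum a c) * dsum p s * dsum a c = dsum (adjm cj a * p * a) (adjm cj c * s * c)"
proof -
  have "adjm cj (dsum a c) * dsum p s = dsum (adjm cj a * p) (adjm cj c * s)"
    using assms by (simp add: adjm_dsum dsum_mult[OF adjm_carrier[OF assms(1)] assms(2)
          adjm_carrier[OF assms(3)] assms(4)])
  then show ?thesis
    using assms by (simp add: dsum_mult[OF mult_carrier_mat[OF adjm_carrier[OF assms(1)] assms(2)]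
          assms(1) mult_carrier_mat[OF adjm_carrier[OF assms(3)] assms(4)] assms(3)])
qed

lemma vinner_unit_vec:
  assumes "A \<in> carrier_mat n n" "i < n"
  shows "vinner (unit_vec n i) (A *\<^sub>v unit_vec n i) = A $$ (i,i)"
proof -
  have "vinner (unit_vec n i) (A *\<^sub>v unit_vec n i) = (\<Sum>k<n. if k = i then (A *\<^sub>v unit_vec n i) $ k else 0)"
    unfolding vinner_def by (rule sum.cong) (auto simp: unit_vec_def)
  also have "\<dots> = A $$ (i,i)"
    using assms by (simp add: scalar_prod_row if_distrib sum.delta' cong: if_cong)
  finally show ?thesis .
qed

lemma posdef_mat_Suc_blocks:
  assumes "posdef_mat (Suc n) P"
  obtains r B D where "r > 0" "B \<in> carrier_mat 1 n" "D \<in> carrier_mat n n"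
    "P = four_block_mat ((of_real r :: 'k) \<cdot>\<^sub>m 1\<^sub>m 1) B (adjm cj B) D"
proof -
  have P: "P \<in> carrier_mat (1 + n) (1 + n)" "adjm cj P = P"
    using assms by (auto simp: posdef_mat_def)
  obtain A1 B C D where split: "split_block P 1 1 = (A1, B, C, D)"
    by (metis prod_cases4)
  note blocks = split_block[OF split carrier_matD[OF P(1)]]
  have A1: "A1 = mat 1 1 (($$) P)" and C: "C = mat n 1 (\<lambda>(i,j). P $$ (Suc i, j))"
    and B: "B = mat 1 n (\<lambda>(i,j). P $$ (i, Suc j))"
    using split P(1) by (auto simp: split_block_def)
  obtain r where r: "r > 0" "vinner (unit_vec (Suc n) 0) (P *\<^sub>v unit_vec (Suc n) 0) = of_real r"
    using assms unfolding posdef_mat_def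
    by (metis unit_vec_carrier index_unit_vec(1) index_zero_vec(1) zero_less_Suc zero_neq_one)
  have "A1 = (of_real r :: 'k) \<cdot>\<^sub>m 1\<^sub>m 1"
    using r(2) vinner_unit_vec[of P "Suc n" 0] P(1) unfolding A1
    by (intro eq_matI) auto
  moreover have "C = adjm cj B"
  proof (rule eq_matI)
    fix i j assume "i < dim_row (adjm cj B)" "j < dim_col (adjm cj B)"
    then have ij: "i < n" "j = 0" using blocks by auto
    have "C $$ (i,j) = adjm cj P $$ (Suc i, 0)"
      using P ij by (simp add: C)
    also have "\<dots> = adjm cj B $$ (i,j)"
      using P(1) ij by (simp add: B)
    finally show "C $$ (i,j) = adjm cj B $$ (i,j)" .
  qed (use blocks in auto)
  ultimately show ?thesis
    using that r(1) blocks by auto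
qed

lemma posdef_mat_congruence:
  assumes P: "posdef_mat n P" and L: "L \<in> carrier_mat n m"
    and inj: "\<And>v. v \<in> carrier_vec m \<Longrightarrow> v \<noteq> 0\<^sub>v m \<Longrightarrow> L *\<^sub>v v \<noteq> 0\<^sub>v n"
  shows "posdef_mat m (adjm cj L * P * L)"
proof -
  have Pc: "P \<in> carrier_mat n n" "adjm cj P = P" using P by (auto simp: posdef_mat_def)
  have "adjm cj (adjm cj L * P * L) = adjm cj L * P * L"
    using L Pc
    by (simp only: adjm_mult[OF mult_carrier_mat[OF adjm_carrier[OF L] Pc(1)] L]
        adjm_mult[OF adjm_carrier[OF L] Pc(1)] adjm_adjm Pc(2))
      (simp add: assoc_mult_mat[of _ m n _ n _ m])
  moreover have "vinner v ((adjm cj L * P * L) *\<^sub>v v) = vinner (L *\<^sub>v v) (P *\<^sub>v (L *\<^sub>v v))"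
    if v: "v \<in> carrier_vec m" for v
  proof -
    have "(adjm cj L * P * L) *\<^sub>v v = (adjm cj L * P) *\<^sub>v (L *\<^sub>v v)"
      by (rule assoc_mult_mat_vec[OF mult_carrier_mat[OF adjm_carrier[OF L] Pc(1)] L v])
    also have "\<dots> = adjm cj L *\<^sub>v (P *\<^sub>v (L *\<^sub>v v))"
      using L v by (intro assoc_mult_mat_vec[OF adjm_carrier[OF L] Pc(1)]) simp
    finally have "(adjm cj L * P * L) *\<^sub>v v = adjm cj L *\<^sub>v (P *\<^sub>v (L *\<^sub>v v))" .
    then show ?thesis
      using vinner_adjm[of "adjm cj L" m n v "P *\<^sub>v (L *\<^sub>v v)"] L Pc v by simp
  qed
  ultimately show ?thesis
    using P L inj unfolding posdef_mat_def by auto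
qed

lemma posdef_mat_dsum_right:
  assumes "posdef_mat (k + n) (dsum A S)" "A \<in> carrier_mat k k" "S \<in> carrier_mat n n"
  shows "posdef_mat n S"
proof -
  have sa: "dsum (adjm cj A) (adjm cj S) = dsum A S"
    using assms by (simp add: posdef_mat_def adjm_dsum)
  have "adjm cj S = S"
  proof (rule eq_matI)
    fix i j assume "i < dim_row S" "j < dim_col S"
    then show "adjm cj S $$ (i,j) = S $$ (i,j)"
      using arg_cong[OF sa, of "\<lambda>M. M $$ (k + i, k + j)"] assms(2,3) by (simp add: dsum_def)
  qed (use assms in auto)
  moreover have "\<exists>r>0. vinner w (S *\<^sub>v w) = of_real r"
    if w: "w \<in> carrier_vec n" "w \<noteq> 0\<^sub>v n" for w
  proof -
    have "0\<^sub>v (k + n) = 0\<^sub>v k @\<^sub>v (0\<^sub>v n :: 'k vec)"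
      by (intro eq_vecI) auto
    then have "0\<^sub>v k @\<^sub>v w \<noteq> 0\<^sub>v (k + n)"
      using w by (simp add: append_vec_eq[OF zero_carrier_vec zero_carrier_vec])
    then obtain r where "r > 0" "vinner (0\<^sub>v k @\<^sub>v w) (dsum A S *\<^sub>v (0\<^sub>v k @\<^sub>v w)) = of_real r"
      using assms(1) w(1) unfolding posdef_mat_def by (metis append_carrier_vec zero_carrier_vec)
    moreover have "dsum A S *\<^sub>v (0\<^sub>v k @\<^sub>v w) = A *\<^sub>v 0\<^sub>v k @\<^sub>v S *\<^sub>v w"
      unfolding dsum_def using assms(2,3) w(1) by (auto intro: mult_mat_vec_split)
    ultimately show ?thesis
      using assms(2,3) w(1) by (auto simp: vinner_append)
  qed
  ultimately show ?thesis using assms(3) by (simp add: posdef_mat_def)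
qed

lemma schur_elimination:
  assumes B: "B \<in> carrier_mat 1 n" and D: "D \<in> carrier_mat n n" and \<sigma>: "\<sigma> \<noteq> 0"
  shows "four_block_mat (\<sigma> \<cdot>\<^sub>m 1\<^sub>m 1) B (adjm cj B) D * four_block_mat (1\<^sub>m 1) (- (1 / \<sigma>) \<cdot>\<^sub>m B) (0\<^sub>m n 1) (1\<^sub>m n)
    = four_block_mat (\<sigma> \<cdot>\<^sub>m 1\<^sub>m 1) (0\<^sub>m 1 n) (adjm cj B) (D - (1 / \<sigma>) \<cdot>\<^sub>m (adjm cj B * B))"
proof (subst mult_four_block_mat[OF smult_carrier_mat[OF one_carrier_mat] B adjm_carrier[OF B] D
      one_carrier_mat _ zero_carrier_mat one_carrier_mat])
  let ?X = "- (1 / \<sigma>) \<cdot>\<^sub>m B"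
  show "?X \<in> carrier_mat 1 n" using B by simp
  have "(\<sigma> \<cdot>\<^sub>m 1\<^sub>m 1) * ?X + B * 1\<^sub>m n = 0\<^sub>m 1 n"
    using B \<sigma> by (intro eq_matI) (auto simp: scalar_prod_def)
  moreover have "adjm cj B * ?X + D * 1\<^sub>m n = D - (1 / \<sigma>) \<cdot>\<^sub>m (adjm cj B * B)"
    using B D by (intro eq_matI) (auto simp: scalar_prod_def sum_distrib_left ac_simps)
  ultimately show "four_block_mat ((\<sigma> \<cdot>\<^sub>m 1\<^sub>m 1) * 1\<^sub>m 1 + B * 0\<^sub>m n 1)
      ((\<sigma> \<cdot>\<^sub>m 1\<^sub>m 1) * ?X + B * 1\<^sub>m n) (adjm cj B * 1\<^sub>m 1 + D * 0\<^sub>m n 1) (adjm cj B * ?X + D * 1\<^sub>m n)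
    = four_block_mat (\<sigma> \<cdot>\<^sub>m 1\<^sub>m 1) (0\<^sub>m 1 n) (adjm cj B) (D - (1 / \<sigma>) \<cdot>\<^sub>m (adjm cj B * B))"
    using B D by simp
qed

lemma schur_complement_congruence:
  assumes B: "B \<in> carrier_mat 1 n" and D: "D \<in> carrier_mat n n" and \<sigma>: "\<sigma> \<noteq> 0" "cj \<sigma> = \<sigma>"
  defines "L \<equiv> four_block_mat (1\<^sub>m 1) (- (1 / \<sigma>) \<cdot>\<^sub>m B) (0\<^sub>m n 1) (1\<^sub>m n)"
  shows "adjm cj L * four_block_mat (\<sigma> \<cdot>\<^sub>m 1\<^sub>m 1) B (adjm cj B) D * L
    = dsum (\<sigma> \<cdot>\<^sub>m 1\<^sub>m 1) (D - (1 / \<sigma>) \<cdot>\<^sub>m (adjm cj B * B))"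
proof -
  let ?X = "- (1 / \<sigma>) \<cdot>\<^sub>m B"
  let ?S = "D - (1 / \<sigma>) \<cdot>\<^sub>m (adjm cj B * B)"
  have X: "?X \<in> carrier_mat 1 n" using B by simp
  have S: "?S \<in> carrier_mat n n"
    by (intro minus_carrier_mat smult_carrier_mat mult_carrier_mat[OF adjm_carrier[OF B] B])
  have "adjm cj L * four_block_mat (\<sigma> \<cdot>\<^sub>m 1\<^sub>m 1) B (adjm cj B) D * L
      = adjm cj L * (four_block_mat (\<sigma> \<cdot>\<^sub>m 1\<^sub>m 1) B (adjm cj B) D * L)"
    unfolding L_def using B D X
    by (intro assoc_mult_mat[of _ "1 + n" "1 + n" _ "1 + n" _ "1 + n"]) auto
  also have "\<dots> = four_block_mat (1\<^sub>m 1) (0\<^sub>m 1 n) (adjm cj ?X) (1\<^sub>m n)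
      * four_block_mat (\<sigma> \<cdot>\<^sub>m 1\<^sub>m 1) (0\<^sub>m 1 n) (adjm cj B) ?S"
    unfolding L_def schur_elimination[OF B D \<sigma>(1)]
      adjm_four_block_mat[OF one_carrier_mat X zero_carrier_mat one_carrier_mat] by simp
  also have "\<dots> = four_block_mat (1\<^sub>m 1 * (\<sigma> \<cdot>\<^sub>m 1\<^sub>m 1) + 0\<^sub>m 1 n * adjm cj B)
      (1\<^sub>m 1 * 0\<^sub>m 1 n + 0\<^sub>m 1 n * ?S) (adjm cj ?X * (\<sigma> \<cdot>\<^sub>m 1\<^sub>m 1) + 1\<^sub>m n * adjm cj B)
      (adjm cj ?X * 0\<^sub>m 1 n + 1\<^sub>m n * ?S)"
    using B D by (intro mult_four_block_mat) auto
  also have "adjm cj ?X * (\<sigma> \<cdot>\<^sub>m 1\<^sub>m 1) + 1\<^sub>m n * adjm cj B = 0\<^sub>m n 1"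
    using B \<sigma> by (intro eq_matI) (auto simp: scalar_prod_def cj_mult cj_minus divide_inverse cj_inverse)
  also have "four_block_mat (1\<^sub>m 1 * (\<sigma> \<cdot>\<^sub>m 1\<^sub>m 1) + 0\<^sub>m 1 n * adjm cj B) (1\<^sub>m 1 * 0\<^sub>m 1 n + 0\<^sub>m 1 n * ?S)
      (0\<^sub>m n 1) (adjm cj ?X * 0\<^sub>m 1 n + 1\<^sub>m n * ?S) = dsum (\<sigma> \<cdot>\<^sub>m 1\<^sub>m 1) ?S"
    using B S by (simp add: dsum_def)
  finally show ?thesis .
qed

lemma posdef_mat_congruent_one:
  "posdef_mat n P \<Longrightarrow> \<exists>b \<in> carrier_mat n n. adjm cj b * P * b = 1\<^sub>m n"
proof (induct n arbitrary: P)
  case 0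
  then show ?case by (intro bexI[of _ "1\<^sub>m 0"]) (auto intro!: eq_matI simp: posdef_mat_def)
next
  case (Suc n)
  \<comment> \<open>eliminate the first row and column; the Schur complement \<open>S\<close> is again positive definite\<close>
  obtain r B D where r: "r > 0" and B: "B \<in> carrier_mat 1 n" and D: "D \<in> carrier_mat n n"
    and P: "P = four_block_mat ((of_real r :: 'k) \<cdot>\<^sub>m 1\<^sub>m 1) B (adjm cj B) D"
    using posdef_mat_Suc_blocks[OF Suc.prems] by blast
  define \<sigma> where "\<sigma> = (of_real r :: 'k)"
  define X where "X = - (1 / \<sigma>) \<cdot>\<^sub>m B"
  define L where "L = four_block_mat (1\<^sub>m 1) X (0\<^sub>m n 1) (1\<^sub>m n)"
  define S where "S = D - (1 / \<sigma>) \<cdot>\<^sub>m (adjm cj B * B)"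
  have X: "X \<in> carrier_mat 1 n" and L: "L \<in> carrier_mat (Suc n) (Suc n)" and S: "S \<in> carrier_mat n n"
    using B D by (auto simp: X_def L_def S_def)
  have \<sigma>: "\<sigma> \<noteq> 0" "cj \<sigma> = \<sigma>" using r by (simp_all add: \<sigma>_def)
  have L_inj: "L *\<^sub>v v \<noteq> 0\<^sub>v (Suc n)" if "v \<in> carrier_vec (Suc n)" "v \<noteq> 0\<^sub>v (Suc n)" for v
    using unit_upper_block_mult_vec_neq_zero[OF X, of v] that by (simp add: L_def)
  have "adjm cj L * P * L = dsum (\<sigma> \<cdot>\<^sub>m 1\<^sub>m 1) S"
    unfolding L_def X_def S_def P \<sigma>_def[symmetric] by (rule schur_complement_congruence[OF B D \<sigma>])
  with posdef_mat_congruence[OF Suc.prems L L_inj] have "posdef_mat (1 + n) (dsum (\<sigma> \<cdot>\<^sub>m 1\<^sub>m 1) S)"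
    by simp
  then have "posdef_mat n S"
    by (rule posdef_mat_dsum_right) (simp_all add: S)
  then obtain c where c: "c \<in> carrier_mat n n" "adjm cj c * S * c = 1\<^sub>m n"
    using Suc.hyps by blast
  define t where "t = (of_real (1 / sqrt r) :: 'k)"
  have t: "cj t = t" "t * \<sigma> * t = 1"
    using r unfolding t_def \<sigma>_def by (simp_all only: cj_of_real flip: of_real_mult) simp
  define M where "M = dsum (t \<cdot>\<^sub>m 1\<^sub>m 1) c"
  have M: "M \<in> carrier_mat (Suc n) (Suc n)"
    using dsum_carrier[of "t \<cdot>\<^sub>m 1\<^sub>m 1" 1 c n] c by (simp add: M_def)
  have "adjm cj (L * M) * P * (L * M) = adjm cj M * (adjm cj L * P * L) * M"
    using L M Suc.prems
    by (simp add: posdef_mat_def adjm_mult[OF L M] assoc_mult_mat[of _ "Suc n" "Suc n" _ "Suc n" _ "Suc n"]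
        mult_carrier_mat[of _ "Suc n" "Suc n" _ "Suc n"])
  also have "\<dots> = dsum (adjm cj (t \<cdot>\<^sub>m 1\<^sub>m 1) * (\<sigma> \<cdot>\<^sub>m 1\<^sub>m 1) * (t \<cdot>\<^sub>m 1\<^sub>m 1)) (adjm cj c * S * c)"
    unfolding M_def \<open>adjm cj L * P * L = _\<close> using c S by (intro dsum_congruence) auto
  also have "adjm cj (t \<cdot>\<^sub>m 1\<^sub>m 1) * (\<sigma> \<cdot>\<^sub>m 1\<^sub>m 1) * (t \<cdot>\<^sub>m 1\<^sub>m 1) = 1\<^sub>m 1"
    using t by (intro eq_matI) (auto simp: scalar_prod_def adjm_smult)
  also have "dsum (1\<^sub>m 1) (adjm cj c * S * c) = four_block_mat (1\<^sub>m 1) (0\<^sub>m 1 n) (0\<^sub>m n 1) (1\<^sub>m n)"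
    using c by (simp add: dsum_def)
  also have "\<dots> = 1\<^sub>m (Suc n)"
    by (subst four_block_one_mat) simp
  finally show ?case using mult_carrier_mat[OF L M] by blast
qed

lemma psd_mat_vinner:
  assumes "psd_mat cj n A" "v \<in> carrier_vec n"
  obtains r where "r \<ge> 0" "vinner v (A *\<^sub>v v) = of_real r"
proof -
  have "dim_vec v = n" using assms(2) by simp
  then show ?thesis using assms that unfolding psd_mat_def vinner_def by blast
qed

lemma vinner_square_selfadjoint:
  assumes c: "c \<in> carrier_mat n n" "adjm cj c = c" and v: "v \<in> carrier_vec n"
  shows "vinner v (c *\<^sub>v (c *\<^sub>v v)) = of_real ((vnorm (c *\<^sub>v v))\<^sup>2)"
  using vinner_adjm[OF c(1) v mult_mat_vec_carrier[OF c(1) v]] unfolding c(2) vinner_self .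

lemma vnorm_squares_le:
  assumes c1: "c1 \<in> carrier_mat n n" "adjm cj c1 = c1" and c2: "c2 \<in> carrier_mat n n" "adjm cj c2 = c2"
    and M: "psd_mat cj n (of_real t \<cdot>\<^sub>m 1\<^sub>m n - (c1 * c1 + c2 * c2))" and v: "v \<in> carrier_vec n"
  shows "(vnorm (c1 *\<^sub>v v))\<^sup>2 + (vnorm (c2 *\<^sub>v v))\<^sup>2 \<le> t * (vnorm v)\<^sup>2"
proof -
  obtain \<rho> where \<rho>: "\<rho> \<ge> 0" "vinner v ((of_real t \<cdot>\<^sub>m 1\<^sub>m n - (c1 * c1 + c2 * c2)) *\<^sub>v v) = of_real \<rho>"
    using psd_mat_vinner[OF M v] by blast
  have "(of_real t \<cdot>\<^sub>m 1\<^sub>m n - (c1 * c1 + c2 * c2)) *\<^sub>v v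
      = (of_real t :: 'k) \<cdot>\<^sub>v v - (c1 *\<^sub>v (c1 *\<^sub>v v) + c2 *\<^sub>v (c2 *\<^sub>v v))"
    using c1 c2 v
    by (simp add: minus_mult_distrib_mat_vec[of _ n n] add_mult_distrib_mat_vec[of _ n n]
        smult_mat_mult_vec)
  then have "vinner v ((of_real t \<cdot>\<^sub>m 1\<^sub>m n - (c1 * c1 + c2 * c2)) *\<^sub>v v)
      = of_real t * vinner v v - (vinner v (c1 *\<^sub>v (c1 *\<^sub>v v)) + vinner v (c2 *\<^sub>v (c2 *\<^sub>v v)))"
    using c1 c2 v by (simp add: vinner_diff_right vinner_add_right vinner_smult_right)
  also have "\<dots> = of_real (t * (vnorm v)\<^sup>2 - ((vnorm (c1 *\<^sub>v v))\<^sup>2 + (vnorm (c2 *\<^sub>v v))\<^sup>2))"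
    by (simp only: vinner_self vinner_square_selfadjoint[OF c1 v] vinner_square_selfadjoint[OF c2 v]
        of_real_mult of_real_add of_real_diff)
  finally have "t * (vnorm v)\<^sup>2 - ((vnorm (c1 *\<^sub>v v))\<^sup>2 + (vnorm (c2 *\<^sub>v v))\<^sup>2) = \<rho>"
    using \<rho>(2) by (simp only: of_real_eq_iff)
  with \<rho>(1) show ?thesis by linarith
qed

lemma opnorm_add_squares_le:
  assumes c1: "c1 \<in> carrier_mat n n" "adjm cj c1 = c1" and c2: "c2 \<in> carrier_mat n n" "adjm cj c2 = c2"
    and M: "psd_mat cj n (of_real t \<cdot>\<^sub>m 1\<^sub>m n - (c1 * c1 + c2 * c2))" and t: "t \<ge> 0"
  shows "opnorm (c1 * c1 + c2 * c2) \<le> t"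
proof (rule opnorm_selfadjoint_le[OF _ _ t])
  show "c1 * c1 + c2 * c2 \<in> carrier_mat n n" using c1 c2 by simp
  show "adjm cj (c1 * c1 + c2 * c2) = c1 * c1 + c2 * c2"
    using c1 c2 by (simp add: adjm_add[of _ n n] adjm_mult[of _ n n])
  fix v :: "'k vec" assume v: "v \<in> carrier_vec n"
  have "vinner v ((c1 * c1 + c2 * c2) *\<^sub>v v) = vinner v (c1 *\<^sub>v (c1 *\<^sub>v v)) + vinner v (c2 *\<^sub>v (c2 *\<^sub>v v))"
    using c1 c2 v by (simp add: add_mult_distrib_mat_vec[of _ n n] vinner_add_right)
  also have "\<dots> = of_real ((vnorm (c1 *\<^sub>v v))\<^sup>2 + (vnorm (c2 *\<^sub>v v))\<^sup>2)"
    by (simp only: vinner_square_selfadjoint[OF c1 v] vinner_square_selfadjoint[OF c2 v] of_real_add)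
  finally show "norm (vinner v ((c1 * c1 + c2 * c2) *\<^sub>v v)) \<le> t * (vnorm v)\<^sup>2"
    using vnorm_squares_le[OF c1 c2 M v] by (simp only: norm_of_real) simp
qed

lemma opnorm_diff_squares_le:
  assumes c1: "c1 \<in> carrier_mat n n" "adjm cj c1 = c1" and c2: "c2 \<in> carrier_mat n n" "adjm cj c2 = c2"
    and M: "psd_mat cj n (of_real t \<cdot>\<^sub>m 1\<^sub>m n - (c1 * c1 + c2 * c2))" and t: "t \<ge> 0"
  shows "opnorm (c1 * c1 - c2 * c2) \<le> t"
proof (rule opnorm_selfadjoint_le[OF _ _ t])
  show "c1 * c1 - c2 * c2 \<in> carrier_mat n n"
    using c1 c2 by (intro minus_carrier_mat) simp
  show "adjm cj (c1 * c1 - c2 * c2) = c1 * c1 - c2 * c2"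
    using c1 c2 by (simp add: adjm_diff[of _ n n] adjm_mult[of _ n n])
  fix v :: "'k vec" assume v: "v \<in> carrier_vec n"
  have "vinner v ((c1 * c1 - c2 * c2) *\<^sub>v v) = vinner v (c1 *\<^sub>v (c1 *\<^sub>v v)) - vinner v (c2 *\<^sub>v (c2 *\<^sub>v v))"
    using c1 c2 v by (simp add: minus_mult_distrib_mat_vec[of _ n n] vinner_diff_right)
  also have "\<dots> = of_real ((vnorm (c1 *\<^sub>v v))\<^sup>2 - (vnorm (c2 *\<^sub>v v))\<^sup>2)"
    by (simp only: vinner_square_selfadjoint[OF c1 v] vinner_square_selfadjoint[OF c2 v] of_real_diff)
  finally show "norm (vinner v ((c1 * c1 - c2 * c2) *\<^sub>v v)) \<le> t * (vnorm v)\<^sup>2"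
    using vnorm_squares_le[OF c1 c2 M v] zero_le_power2[of "vnorm (c1 *\<^sub>v v)"]
      zero_le_power2[of "vnorm (c2 *\<^sub>v v)"]
    by (simp only: norm_of_real abs_le_iff) linarith
qed

end

section \<open>Matrices over a module\<close>

context Modules.module
begin

lemma lmul_dims[simp]: "dim_row (lmul scale A X) = dim_row A" "dim_col (lmul scale A X) = dim_col X"
  by (simp_all add: lmul_def)

lemma rmul_dims[simp]: "dim_row (rmul scale X B) = dim_row X" "dim_col (rmul scale X B) = dim_col B"
  by (simp_all add: rmul_def)

lemma bimul_dims[simp]: "dim_row (bimul scale A X B) = dim_row A" "dim_col (bimul scale A X B) = dim_col B"
  by (simp_all add: bimul_def)

lemma lmul_carrier: "A \<in> carrier_mat m p \<Longrightarrow> X \<in> carrier_mat p q \<Longrightarrow> lmul scale A X \<in> carrier_mat m q"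
  by (intro carrier_matI) auto

lemma bimul_carrier: "A \<in> carrier_mat m p \<Longrightarrow> B \<in> carrier_mat q r \<Longrightarrow> bimul scale A X B \<in> carrier_mat m r"
  by (intro carrier_matI) auto

lemma lmul_index:
  "i < dim_row A \<Longrightarrow> j < dim_col X \<Longrightarrow>
    lmul scale A X $$ (i,j) = (\<Sum>p<dim_col A. scale (A $$ (i,p)) (X $$ (p,j)))"
  by (simp add: lmul_def)

lemma rmul_index:
  "i < dim_row X \<Longrightarrow> j < dim_col B \<Longrightarrow>
    rmul scale X B $$ (i,j) = (\<Sum>q<dim_row B. scale (B $$ (q,j)) (X $$ (i,q)))"
  by (simp add: rmul_def)

lemma bimul_index:
  assumes "A \<in> carrier_mat m p" "X \<in> carrier_mat p q" "B \<in> carrier_mat q r" "i < m" "j < r"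
  shows "bimul scale A X B $$ (i,j) = (\<Sum>a<p. \<Sum>b<q. scale (A $$ (i,a) * B $$ (b,j)) (X $$ (a,b)))"
proof -
  have "bimul scale A X B $$ (i,j) = (\<Sum>b<q. \<Sum>a<p. scale (A $$ (i,a) * B $$ (b,j)) (X $$ (a,b)))"
    using assms by (simp add: bimul_def lmul_index rmul_index scale_sum_right mult.commute)
  also have "\<dots> = (\<Sum>a<p. \<Sum>b<q. scale (A $$ (i,a) * B $$ (b,j)) (X $$ (a,b)))"
    by (rule sum.swap)
  finally show ?thesis .
qed

lemma lmul_lmul:
  assumes A: "A \<in> carrier_mat m p" and C: "C \<in> carrier_mat p p'" and X: "X \<in> carrier_mat p' q"
  shows "lmul scale A (lmul scale C X) = lmul scale (A * C) X"
proof (rule eq_matI)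
  fix i j assume "i < dim_row (lmul scale (A * C) X)" "j < dim_col (lmul scale (A * C) X)"
  then have i: "i < m" and j: "j < q" using A X by auto
  have "lmul scale A (lmul scale C X) $$ (i,j) = (\<Sum>a<p. \<Sum>c<p'. scale (A $$ (i,a) * C $$ (a,c)) (X $$ (c,j)))"
    using A C X i j by (simp add: lmul_index scale_sum_right)
  also have "\<dots> = (\<Sum>c<p'. \<Sum>a<p. scale (A $$ (i,a) * C $$ (a,c)) (X $$ (c,j)))"
    by (rule sum.swap)
  also have "\<dots> = lmul scale (A * C) X $$ (i,j)"
    using A C X i j by (simp add: lmul_index scalar_prod_row_col[OF A C] scale_sum_left)
  finally show "lmul scale A (lmul scale C X) $$ (i,j) = lmul scale (A * C) X $$ (i,j)" .
qed (use A C X in auto)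

lemma rmul_rmul:
  assumes X: "X \<in> carrier_mat m q'" and D: "D \<in> carrier_mat q' q" and B: "B \<in> carrier_mat q r"
  shows "rmul scale (rmul scale X D) B = rmul scale X (D * B)"
proof (rule eq_matI)
  fix i j assume "i < dim_row (rmul scale X (D * B))" "j < dim_col (rmul scale X (D * B))"
  then have i: "i < m" and j: "j < r" using X B by auto
  have "rmul scale (rmul scale X D) B $$ (i,j) = (\<Sum>b<q. \<Sum>d<q'. scale (D $$ (d,b) * B $$ (b,j)) (X $$ (i,d)))"
    using X D B i j by (simp add: rmul_index scale_sum_right mult.commute)
  also have "\<dots> = (\<Sum>d<q'. \<Sum>b<q. scale (D $$ (d,b) * B $$ (b,j)) (X $$ (i,d)))"
    by (rule sum.swap)
  also have "\<dots> = rmul scale X (D * B) $$ (i,j)"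
    using X D B i j by (simp add: rmul_index scalar_prod_row_col[OF D B] scale_sum_left)
  finally show "rmul scale (rmul scale X D) B $$ (i,j) = rmul scale X (D * B) $$ (i,j)" .
qed (use X B in auto)

lemma rmul_lmul:
  assumes A: "A \<in> carrier_mat m p" and X: "X \<in> carrier_mat p q" and B: "B \<in> carrier_mat q r"
  shows "rmul scale (lmul scale A X) B = lmul scale A (rmul scale X B)"
proof (rule eq_matI)
  fix i j assume "i < dim_row (lmul scale A (rmul scale X B))" "j < dim_col (lmul scale A (rmul scale X B))"
  then have i: "i < m" and j: "j < r" using A B by auto
  have "rmul scale (lmul scale A X) B $$ (i,j) = (\<Sum>b<q. \<Sum>a<p. scale (B $$ (b,j) * A $$ (i,a)) (X $$ (a,b)))"
    using A X B i j by (simp add: rmul_index lmul_index scale_sum_right)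
  also have "\<dots> = (\<Sum>a<p. \<Sum>b<q. scale (B $$ (b,j) * A $$ (i,a)) (X $$ (a,b)))"
    by (rule sum.swap)
  also have "\<dots> = lmul scale A (rmul scale X B) $$ (i,j)"
    using A X B i j by (simp add: rmul_index lmul_index scale_sum_right mult.commute)
  finally show "rmul scale (lmul scale A X) B $$ (i,j) = lmul scale A (rmul scale X B) $$ (i,j)" .
qed (use A B in auto)

lemma bimul_bimul:
  assumes A: "A \<in> carrier_mat m p" and C: "C \<in> carrier_mat p p'" and X: "X \<in> carrier_mat p' q'"
    and D: "D \<in> carrier_mat q' q" and B: "B \<in> carrier_mat q r"
  shows "bimul scale A (bimul scale C X D) B = bimul scale (A * C) X (D * B)"
proof -
  have CX: "lmul scale C X \<in> carrier_mat p q'" by (rule lmul_carrier[OF C X])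
  have "bimul scale A (bimul scale C X D) B = rmul scale (lmul scale A (rmul scale (lmul scale C X) D)) B"
    by (simp add: bimul_def)
  also have "lmul scale A (rmul scale (lmul scale C X) D) = rmul scale (lmul scale A (lmul scale C X)) D"
    by (rule rmul_lmul[OF A CX D, symmetric])
  also have "lmul scale A (lmul scale C X) = lmul scale (A * C) X"
    by (rule lmul_lmul[OF A C X])
  also have "rmul scale (rmul scale (lmul scale (A * C) X) D) B = rmul scale (lmul scale (A * C) X) (D * B)"
    by (rule rmul_rmul[OF lmul_carrier[OF mult_carrier_mat[OF A C] X] D B])
  finally show ?thesis by (simp add: bimul_def)
qed

lemma bimul_one:
  assumes "Y \<in> carrier_mat n n"
  shows "bimul scale (1\<^sub>m n) Y (1\<^sub>m n) = Y"
proof (rule eq_matI)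
  fix i j assume "i < dim_row Y" "j < dim_col Y"
  then have i: "i < n" and j: "j < n" using assms by auto
  have "bimul scale (1\<^sub>m n) Y (1\<^sub>m n) $$ (i,j)
      = (\<Sum>a<n. \<Sum>b<n. scale ((1\<^sub>m n :: 'a mat) $$ (i,a) * (1\<^sub>m n :: 'a mat) $$ (b,j)) (Y $$ (a,b)))"
    using i j by (rule bimul_index[OF one_carrier_mat assms one_carrier_mat])
  also have "\<dots> = (\<Sum>a<n. \<Sum>b<n. if a = i then (if b = j then Y $$ (a,b) else 0) else 0)"
    by (intro sum.cong refl) (use i j in auto)
  also have "\<dots> = (\<Sum>a<n. if a = i then Y $$ (a,j) else 0)"
    by (rule sum.cong[OF refl]) (use j in auto)
  also have "\<dots> = Y $$ (i,j)" using i by simp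
  finally show "bimul scale (1\<^sub>m n) Y (1\<^sub>m n) $$ (i,j) = Y $$ (i,j)" .
qed (use assms in auto)

lemma msmul_dims[simp]: "dim_row (msmul scale c X) = dim_row X" "dim_col (msmul scale c X) = dim_col X"
  by (simp_all add: msmul_def)

lemma msmul_carrier: "X \<in> carrier_mat n m \<Longrightarrow> msmul scale c X \<in> carrier_mat n m"
  by (intro carrier_matI) auto

lemma msmul_msmul: "msmul scale a (msmul scale b X) = msmul scale (a * b) X"
  by (intro eq_matI) (auto simp: msmul_def)

lemma msmul_one: "msmul scale 1 X = X"
  by (intro eq_matI) (auto simp: msmul_def)

lemma msmul_zero: "msmul scale 0 X = 0\<^sub>m (dim_row X) (dim_col X)"
  by (intro eq_matI) (auto simp: msmul_def)

lemma msmul_diff: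
  "X \<in> carrier_mat n m \<Longrightarrow> Y \<in> carrier_mat n m \<Longrightarrow>
    msmul scale c (X - Y) = msmul scale c X - msmul scale c Y"
  by (intro eq_matI) (auto simp: msmul_def scale_right_diff_distrib)

lemma bimul_smult:
  assumes A: "A \<in> carrier_mat m p" and X: "X \<in> carrier_mat p q" and B: "B \<in> carrier_mat q r"
  shows "bimul scale (a \<cdot>\<^sub>m A) X (b \<cdot>\<^sub>m B) = msmul scale (a * b) (bimul scale A X B)"
proof (rule eq_matI)
  fix i j assume "i < dim_row (msmul scale (a * b) (bimul scale A X B))"
    "j < dim_col (msmul scale (a * b) (bimul scale A X B))"
  then have i: "i < m" and j: "j < r" using A B by auto
  show "bimul scale (a \<cdot>\<^sub>m A) X (b \<cdot>\<^sub>m B) $$ (i,j) = msmul scale (a * b) (bimul scale A X B) $$ (i,j)"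
    using A X B i j
    by (simp add: bimul_index[OF smult_carrier_mat[OF A] X smult_carrier_mat[OF B]] bimul_index[OF A X B]
        msmul_def scale_sum_right ac_simps)
qed (use A B in auto)

end

locale linear_functional = Modules.module scale for scale :: "'k::comm_ring_1 \<Rightarrow> 'e::ab_group_add \<Rightarrow> 'e" +
  fixes f :: "'e \<Rightarrow> 'k"
  assumes f_add: "f (x + y) = f x + f y"
    and f_scale: "f (scale c x) = c * f x"
begin

lemma f_0[simp]: "f 0 = 0"
  using f_add[of 0 0] by simp

lemma f_sum: "f (sum g A) = (\<Sum>a\<in>A. f (g a))"
  by (induct A rule: infinite_finite_induct) (auto simp: f_add)

lemma f_diff: "f (x - y) = f x - f y"
  using f_add[of "x - y" y] by (simp add: eq_diff_eq)

lemma map_mat_add: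
  "X \<in> carrier_mat n m \<Longrightarrow> Y \<in> carrier_mat n m \<Longrightarrow> map_mat f (X + Y) = map_mat f X + map_mat f Y"
  by (intro eq_matI) (auto simp: f_add)

lemma map_mat_diff:
  "X \<in> carrier_mat n m \<Longrightarrow> Y \<in> carrier_mat n m \<Longrightarrow> map_mat f (X - Y) = map_mat f X - map_mat f Y"
  by (intro eq_matI) (auto simp: f_diff)

lemma map_mat_msmul: "map_mat f (msmul scale c X) = c \<cdot>\<^sub>m map_mat f X"
  by (intro eq_matI) (auto simp: msmul_def f_scale)

lemma map_mat_bimul:
  assumes A: "A \<in> carrier_mat m p" and X: "X \<in> carrier_mat p q" and B: "B \<in> carrier_mat q r"
  shows "map_mat f (bimul scale A X B) = A * map_mat f X * B"
proof (rule eq_matI)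
  fix i j assume "i < dim_row (A * map_mat f X * B)" "j < dim_col (A * map_mat f X * B)"
  then have i: "i < m" and j: "j < r" using A B by auto
  have "map_mat f (bimul scale A X B) $$ (i,j) = (\<Sum>a<p. \<Sum>b<q. A $$ (i,a) * B $$ (b,j) * f (X $$ (a,b)))"
    using A X B i j by (simp add: bimul_index[OF A X B] f_sum f_scale)
  also have "\<dots> = (\<Sum>b<q. \<Sum>a<p. A $$ (i,a) * B $$ (b,j) * f (X $$ (a,b)))"
    by (rule sum.swap)
  also have "\<dots> = (\<Sum>b<q. (\<Sum>a<p. A $$ (i,a) * map_mat f X $$ (a,b)) * B $$ (b,j))"
    using X by (intro sum.cong refl) (simp add: sum_distrib_left sum_distrib_right ac_simps)
  also have "\<dots> = (\<Sum>b<q. (A * map_mat f X) $$ (i,b) * B $$ (b,j))"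
    using X by (intro sum.cong refl, subst mult_mat_index[OF A _ i, of "map_mat f X" q]) auto
  also have "\<dots> = (A * map_mat f X * B) $$ (i,j)"
    using A X B i j by (intro mult_mat_index[symmetric]) auto
  finally show "map_mat f (bimul scale A X B) $$ (i,j) = (A * map_mat f X * B) $$ (i,j)" .
qed (use A B in auto)

end

lemma operator_space_nrm_nonneg:
  assumes "operator_space scale nrm" "n > 0" "X \<in> carrier_mat n n"
  shows "nrm n X \<ge> 0"
  using assms unfolding operator_space_def matrix_normed_def by simp

lemma operator_space_nrm_eq_0_iff:
  assumes "operator_space scale nrm" "n > 0" "X \<in> carrier_mat n n"
  shows "nrm n X = 0 \<longleftrightarrow> X = 0\<^sub>m n n"
  using assms unfolding operator_space_def matrix_normed_def by simp

lemma operator_space_nrm_triangle: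
  assumes "operator_space scale nrm" "n > 0" "X \<in> carrier_mat n n" "Y \<in> carrier_mat n n"
  shows "nrm n (X + Y) \<le> nrm n X + nrm n Y"
  using assms unfolding operator_space_def matrix_normed_def by simp

lemma operator_space_nrm_msmul:
  assumes "operator_space scale nrm" "n > 0" "X \<in> carrier_mat n n"
  shows "nrm n (msmul scale c X) = norm c * nrm n X"
  using assms unfolding operator_space_def matrix_normed_def by simp

lemma operator_space_bimul_le:
  assumes "operator_space scale nrm" "m > 0" "n > 0"
    "A \<in> carrier_mat m n" "X \<in> carrier_mat n n" "B \<in> carrier_mat n m"
  shows "nrm m (bimul scale A X B) \<le> opnorm A * nrm n X * opnorm B"
  using assms unfolding operator_space_def by simp

lemma operator_space_nrm_dsum:
  assumes "operator_space scale nrm" "n > 0" "m > 0" "X \<in> carrier_mat n n" "Y \<in> carrier_mat m m"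
  shows "nrm (n + m) (dsum X Y) = max (nrm n X) (nrm m Y)"
  using assms unfolding operator_space_def by simp

locale star_module = normed_involution cj + Modules.module scale
  for cj :: "'k::real_normed_field \<Rightarrow> 'k" and scale :: "'k \<Rightarrow> 'e::ab_group_add \<Rightarrow> 'e"
begin

lemma compress_dims[simp]:
  "dim_row (compress scale cj A X) = dim_col A" "dim_col (compress scale cj A X) = dim_col A"
  by (simp_all add: compress_def)

lemma compress_carrier: "A \<in> carrier_mat n m \<Longrightarrow> compress scale cj A X \<in> carrier_mat m m"
  by (intro carrier_matI) auto

lemma compress_compress:
  assumes "b \<in> carrier_mat n m" "b' \<in> carrier_mat k n" "Y \<in> carrier_mat k k"
  shows "compress scale cj b (compress scale cj b' Y) = compress scale cj (b' * b) Y"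
  unfolding compress_def using assms
  by (simp add: bimul_bimul[OF adjm_carrier[OF assms(1)] adjm_carrier[OF assms(2)] assms(3,2,1)] adjm_mult)

lemma compress_one: "Y \<in> carrier_mat n n \<Longrightarrow> compress scale cj (1\<^sub>m n) Y = Y"
  by (simp add: compress_def bimul_one)

lemma compress_smult_selfadjoint:
  assumes "cj s = s" "c \<in> carrier_mat n n" "adjm cj c = c" "Y \<in> carrier_mat n n"
  shows "compress scale cj (s \<cdot>\<^sub>m c) Y = msmul scale (s * s) (bimul scale c Y c)"
  using assms by (simp add: compress_def adjm_smult bimul_smult)

lemma adjm_append_rows_gram:
  assumes a1: "a1 \<in> carrier_mat n m" and a2: "a2 \<in> carrier_mat n m"
  shows "adjm cj (a1 @\<^sub>r a2) * (a1 @\<^sub>r a2) = adjm cj a1 * a1 + adjm cj a2 * a2"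
proof (rule eq_matI)
  fix i j assume "i < dim_row (adjm cj a1 * a1 + adjm cj a2 * a2)" "j < dim_col (adjm cj a1 * a1 + adjm cj a2 * a2)"
  then have i: "i < m" and j: "j < m" using a1 a2 by auto
  have S: "a1 @\<^sub>r a2 \<in> carrier_mat (n + n) m" using a1 a2 by auto
  have "(adjm cj (a1 @\<^sub>r a2) * (a1 @\<^sub>r a2)) $$ (i,j)
      = (\<Sum>k<n + n. cj ((a1 @\<^sub>r a2) $$ (k,i)) * (a1 @\<^sub>r a2) $$ (k,j))"
    using S i j by (simp add: scalar_prod_row_col[OF adjm_carrier[OF S] S])
  also have "\<dots> = (\<Sum>k<n. cj (a1 $$ (k,i)) * a1 $$ (k,j)) + (\<Sum>k<n. cj (a2 $$ (k,i)) * a2 $$ (k,j))"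
    using a1 a2 i j by (simp add: sum_lessThan_add append_rows_def)
  also have "\<dots> = (adjm cj a1 * a1 + adjm cj a2 * a2) $$ (i,j)"
    using a1 a2 i j
    by (simp add: scalar_prod_row_col[OF adjm_carrier[OF a1] a1] scalar_prod_row_col[OF adjm_carrier[OF a2] a2])
  finally show "(adjm cj (a1 @\<^sub>r a2) * (a1 @\<^sub>r a2)) $$ (i,j) = (adjm cj a1 * a1 + adjm cj a2 * a2) $$ (i,j)" .
qed (use a1 a2 in \<open>auto simp: append_rows_def\<close>)

lemma compress_append_rows_dsum:
  assumes a1: "a1 \<in> carrier_mat n m" and a2: "a2 \<in> carrier_mat n m"
    and X1: "X1 \<in> carrier_mat n n" and X2: "X2 \<in> carrier_mat n n"
  shows "compress scale cj (a1 @\<^sub>r a2) (dsum X1 (msmul scale (-1) X2))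
    = compress scale cj a1 X1 - compress scale cj a2 X2"
proof (rule eq_matI)
  let ?S = "a1 @\<^sub>r a2" and ?D = "dsum X1 (msmul scale (-1) X2)"
  have S: "?S \<in> carrier_mat (n + n) m" using a1 a2 by auto
  have D: "?D \<in> carrier_mat (n + n) (n + n)" using X1 X2 by (simp add: msmul_carrier)
  fix i j assume "i < dim_row (compress scale cj a1 X1 - compress scale cj a2 X2)"
    "j < dim_col (compress scale cj a1 X1 - compress scale cj a2 X2)"
  then have i: "i < m" and j: "j < m" using a1 a2 by auto
  have "compress scale cj ?S ?D $$ (i,j)
      = (\<Sum>a<n + n. \<Sum>b<n + n. scale (cj (?S $$ (a,i)) * ?S $$ (b,j)) (?D $$ (a,b)))"
    unfolding compress_def using S i j by (simp add: bimul_index[OF adjm_carrier[OF S] D S])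
  also have "\<dots> = (\<Sum>a<n. \<Sum>b<n. scale (cj (a1 $$ (a,i)) * a1 $$ (b,j)) (X1 $$ (a,b)))
      - (\<Sum>a<n. \<Sum>b<n. scale (cj (a2 $$ (a,i)) * a2 $$ (b,j)) (X2 $$ (a,b)))"
    using a1 a2 X1 X2 i j by (simp add: sum_lessThan_add append_rows_def dsum_def msmul_def sum_negf)
  also have "\<dots> = (compress scale cj a1 X1 - compress scale cj a2 X2) $$ (i,j)"
    unfolding compress_def using a1 a2 X1 X2 i j
    by (simp add: bimul_index[OF adjm_carrier[OF a1] X1 a1] bimul_index[OF adjm_carrier[OF a2] X2 a2])
  finally show "compress scale cj ?S ?D $$ (i,j) = (compress scale cj a1 X1 - compress scale cj a2 X2) $$ (i,j)" .
qed (use a1 a2 carrier_matD[OF carrier_append_rows[OF a1 a2]] in auto)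

lemma nrm_compress_le:
  assumes os: "operator_space scale nrm" and n: "n > 0" "m > 0" and a: "a \<in> carrier_mat n m"
    and Y: "Y \<in> carrier_mat n n" "nrm n Y \<le> 1"
  shows "nrm m (compress scale cj a Y) \<le> opnorm (adjm cj a * a)"
proof -
  have "nrm m (compress scale cj a Y) \<le> opnorm (adjm cj a) * nrm n Y * opnorm a"
    unfolding compress_def by (rule operator_space_bimul_le[OF os n(2,1) adjm_carrier[OF a] Y(1) a])
  also have "\<dots> \<le> opnorm a * 1 * opnorm a"
  proof -
    show ?thesis
      using operator_space_nrm_nonneg[OF os n(1) Y(1)]
      using Y(2) opnorm_adjm_le[OF a] by (intro mult_mono) (auto simp: opnorm_nonneg)
  qed
  also have "\<dots> \<le> opnorm (adjm cj a * a)"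
    using opnorm_power2_le_gram[OF a] by (simp add: power2_eq_square)
  finally show ?thesis .
qed

lemma nrm_compress_diff_le:
  assumes os: "operator_space scale nrm" and n: "n > 0"
    and a: "a1 \<in> carrier_mat n n" "a2 \<in> carrier_mat n n"
    and X: "X1 \<in> carrier_mat n n" "X2 \<in> carrier_mat n n" "nrm n X1 \<le> 1" "nrm n X2 \<le> 1"
  shows "nrm n (compress scale cj a1 X1 - compress scale cj a2 X2) \<le> opnorm (adjm cj a1 * a1 + adjm cj a2 * a2)"
proof -
  let ?D = "dsum X1 (msmul scale (-1) X2)"
  have mX2: "msmul scale (-1) X2 \<in> carrier_mat n n" using X(2) by (rule msmul_carrier)
  have "nrm n (msmul scale (-1) X2) = nrm n X2"
    using operator_space_nrm_msmul[OF os n X(2)] by simp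
  moreover have "nrm (n + n) ?D = max (nrm n X1) (nrm n (msmul scale (-1) X2))"
    by (rule operator_space_nrm_dsum[OF os n n X(1) mX2])
  ultimately have "nrm (n + n) ?D \<le> 1" using X by simp
  then have "nrm n (compress scale cj (a1 @\<^sub>r a2) ?D) \<le> opnorm (adjm cj (a1 @\<^sub>r a2) * (a1 @\<^sub>r a2))"
    using n X(1) mX2 a by (intro nrm_compress_le[OF os]) auto
  then show ?thesis
    by (simp only: compress_append_rows_dsum[OF a X(1,2)] adjm_append_rows_gram[OF a])
qed

end

section \<open>nc base norm spaces\<close>

locale nc_base = normed_involution cj for cj :: "'k::real_normed_field \<Rightarrow> 'k" +
  fixes scale :: "'k \<Rightarrow> 'e::ab_group_add \<Rightarrow> 'e" and sinv :: "'e \<Rightarrow> 'e"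
    and nrm :: "nat \<Rightarrow> 'e mat \<Rightarrow> real" and pos :: "nat \<Rightarrow> 'e mat set"
    and K :: "nat \<Rightarrow> 'e mat set" and f :: "'e \<Rightarrow> 'k"
  assumes nc: "nc_base_norm_space scale cj sinv nrm pos K f"

sublocale nc_base \<subseteq> star_module cj scale
  using nc by unfold_locales (auto simp: nc_base_norm_space_def star_vector_space_def
      vector_space_def module_def)

sublocale nc_base \<subseteq> linear_functional scale f
  using nc by unfold_locales (simp_all add: nc_base_norm_space_def)

context nc_base
begin

lemma operator_space: "operator_space scale nrm"
  using nc by (simp add: nc_base_norm_space_def)

lemma sinv_scale: "sinv (scale c x) = scale (cj c) (sinv x)"
  using nc by (simp add: nc_base_norm_space_def star_vector_space_def)

lemma sinv_add: "sinv (x + y) = sinv x + sinv y"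
  using nc by (simp add: nc_base_norm_space_def star_vector_space_def)

lemma sinv_0[simp]: "sinv 0 = 0"
  using sinv_add[of 0 0] by simp

lemma f_sinv: "f (sinv x) = cj (f x)"
  using nc by (simp add: nc_base_norm_space_def)

lemma f_pos: "m1 x \<in> pos 1 \<Longrightarrow> \<exists>r\<ge>0. f x = of_real r"
  using nc by (simp add: nc_base_norm_space_def)

lemma pos_sa_mats: "n > 0 \<Longrightarrow> pos n \<subseteq> sa_mats sinv n"
  using nc by (simp add: nc_base_norm_space_def matrix_ordered_def)

lemma pos_add: "n > 0 \<Longrightarrow> X \<in> pos n \<Longrightarrow> Y \<in> pos n \<Longrightarrow> X + Y \<in> pos n"
  using nc by (simp add: nc_base_norm_space_def matrix_ordered_def)

lemma pos_msmul: "n > 0 \<Longrightarrow> X \<in> pos n \<Longrightarrow> r \<ge> 0 \<Longrightarrow> msmul scale (of_real r) X \<in> pos n"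
  using nc by (simp add: nc_base_norm_space_def matrix_ordered_def)

lemma pos_compress:
  "n > 0 \<Longrightarrow> m > 0 \<Longrightarrow> A \<in> carrier_mat n m \<Longrightarrow> X \<in> pos n \<Longrightarrow> compress scale cj A X \<in> pos m"
  using nc by (simp add: nc_base_norm_space_def matrix_ordered_def)

lemma K_subset_pos: "n > 0 \<Longrightarrow> K n \<subseteq> pos n"
  using nc by (simp add: nc_base_norm_space_def)

lemma nrm_K_le: "n > 0 \<Longrightarrow> X \<in> K n \<Longrightarrow> nrm n X \<le> 1"
  using nc by (simp add: nc_base_norm_space_def)

lemma K_eq: "n > 0 \<Longrightarrow> K n = {X \<in> pos n. map_mat f X = 1\<^sub>m n}"
  using nc by (simp add: nc_base_norm_space_def)

lemma decomposition:
  assumes "t > 1" "n > 0" "X \<in> sa_mats sinv n" "nrm n X \<le> 1"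
  obtains c1 c2 X1 X2 where "psd_mat cj n c1" "psd_mat cj n c2"
    "psd_mat cj n (of_real t \<cdot>\<^sub>m 1\<^sub>m n - (c1 * c1 + c2 * c2))" "X1 \<in> K n" "X2 \<in> K n"
    "X = bimul scale c1 X1 c1 - bimul scale c2 X2 c2"
proof -
  have "\<forall>t::real. t > 1 \<longrightarrow> (\<forall>n>0. \<forall>X \<in> sa_mats sinv n. nrm n X \<le> 1 \<longrightarrow>
        (\<exists>c1 c2 X1 X2. psd_mat cj n c1 \<and> psd_mat cj n c2 \<and>
           psd_mat cj n (of_real t \<cdot>\<^sub>m 1\<^sub>m n - (c1 * c1 + c2 * c2)) \<and>
           X1 \<in> K n \<and> X2 \<in> K n \<and>
           X = bimul scale c1 X1 c1 - bimul scale c2 X2 c2))"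
    using nc unfolding nc_base_norm_space_def by (elim conjE) assumption
  from this[rule_format, OF assms] show ?thesis using that by blast
qed

lemma pos_carrier: "n > 0 \<Longrightarrow> X \<in> pos n \<Longrightarrow> X \<in> carrier_mat n n"
  using pos_sa_mats by (auto simp: sa_mats_def)

lemma K_carrier: "n > 0 \<Longrightarrow> X \<in> K n \<Longrightarrow> X \<in> carrier_mat n n"
  using K_subset_pos pos_carrier by blast

lemma map_mat_K: "n > 0 \<Longrightarrow> X \<in> K n \<Longrightarrow> map_mat f X = 1\<^sub>m n"
  using K_eq by blast

lemma K_nonempty:
  assumes "n > 0"
  obtains k where "k \<in> K n"
proof -
  have "0\<^sub>m n n \<in> sa_mats sinv n"
    by (auto simp: sa_mats_def mstar_def intro!: eq_matI)
  moreover have "nrm n (0\<^sub>m n n) \<le> 1"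
    using operator_space_nrm_eq_0_iff[OF operator_space assms, of "0\<^sub>m n n"] by simp
  ultimately show ?thesis
    using decomposition[of 2 n "0\<^sub>m n n"] assms that by auto
qed

lemma map_mat_selfadjoint:
  assumes "X \<in> sa_mats sinv n"
  shows "adjm cj (map_mat f X) = map_mat f X"
proof (rule eq_matI)
  have X: "X \<in> carrier_mat n n" "mstar sinv X = X" using assms by (auto simp: sa_mats_def)
  fix i j assume "i < dim_row (map_mat f X)" "j < dim_col (map_mat f X)"
  then have ij: "i < n" "j < n" using X by auto
  have "adjm cj (map_mat f X) $$ (i,j) = f (sinv (X $$ (j,i)))"
    using ij X(1) by (simp add: f_sinv)
  also have "\<dots> = f (mstar sinv X $$ (i,j))"
    using ij X(1) by (simp add: mstar_def)
  finally show "adjm cj (map_mat f X) $$ (i,j) = map_mat f X $$ (i,j)"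
    using ij X by simp
qed (use assms in \<open>auto simp: sa_mats_def\<close>)

text \<open>Positivity of \<open>f\<close> on \<open>M\<^sub>1(E)\<close> passes to \<open>M\<^sub>n(E)\<close> by compressing with the column \<open>v\<close>.\<close>

lemma psd_map_mat:
  assumes n: "n > 0" and X: "X \<in> pos n"
  shows "psd_mat cj n (map_mat f X)"
proof -
  have Xc: "X \<in> carrier_mat n n" by (rule pos_carrier[OF n X])
  have "\<exists>r\<ge>0. vinner v (map_mat f X *\<^sub>v v) = of_real r" if v: "v \<in> carrier_vec n" for v
  proof -
    define A where "A = mat n 1 (\<lambda>(i,j). v $ i)"
    have A: "A \<in> carrier_mat n 1" unfolding A_def by simp
    have Y: "compress scale cj A X \<in> pos 1" by (rule pos_compress[OF n _ A X]) simp
    have "compress scale cj A X = m1 (compress scale cj A X $$ (0,0))"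
      using compress_carrier[OF A] A by (intro eq_matI) (auto simp: m1_def)
    with Y have "m1 (compress scale cj A X $$ (0,0)) \<in> pos 1" by simp
    from f_pos[OF this] obtain r where "r \<ge> 0" "f (compress scale cj A X $$ (0,0)) = of_real r"
      by blast
    moreover have "f (compress scale cj A X $$ (0,0)) = vinner v (map_mat f X *\<^sub>v v)"
    proof -
      have "f (compress scale cj A X $$ (0,0)) = map_mat f (compress scale cj A X) $$ (0,0)"
        using carrier_matD[OF A] by simp
      also have "\<dots> = (adjm cj A * map_mat f X * A) $$ (0,0)"
        unfolding compress_def by (subst map_mat_bimul[OF adjm_carrier[OF A] Xc A]) simp
      also have "\<dots> = (\<Sum>b<n. (adjm cj A * map_mat f X) $$ (0,b) * A $$ (b,0))"
        by (rule mult_mat_index) (use A Xc in auto)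
      also have "\<dots> = (\<Sum>b<n. (\<Sum>a<n. cj (v $ a) * map_mat f X $$ (a,b)) * v $ b)"
        using A Xc
        by (intro sum.cong refl, subst mult_mat_index[OF adjm_carrier[OF A], of _ n]) (auto simp: A_def)
      also have "\<dots> = (\<Sum>a<n. \<Sum>b<n. cj (v $ a) * map_mat f X $$ (a,b) * v $ b)"
        by (simp add: sum_distrib_right) (rule sum.swap)
      also have "\<dots> = vinner v (map_mat f X *\<^sub>v v)"
        using v Xc unfolding vinner_def by (simp add: scalar_prod_row sum_distrib_left ac_simps)
      finally show ?thesis .
    qed
    ultimately show ?thesis by auto
  qed
  then show ?thesis
    using Xc map_mat_selfadjoint[of X n] pos_sa_mats[OF n] X
    unfolding psd_mat_def vinner_def by auto
qed

lemma mstar_msmul: "mstar sinv (msmul scale c X) = msmul scale (cj c) (mstar sinv X)"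
  by (intro eq_matI) (auto simp: msmul_def mstar_def sinv_scale)

lemma scaled_decomposition:
  assumes n: "n > 0" and X: "X \<in> sa_mats sinv n" and t: "t > 1"
  obtains c1 c2 X1 X2 where "psd_mat cj n c1" "psd_mat cj n c2"
    "psd_mat cj n (of_real t \<cdot>\<^sub>m 1\<^sub>m n - (c1 * c1 + c2 * c2))" "X1 \<in> K n" "X2 \<in> K n"
    "X = msmul scale (of_real (nrm n X)) (bimul scale c1 X1 c1 - bimul scale c2 X2 c2)"
proof -
  define r where "r = nrm n X"
  have Xc: "X \<in> carrier_mat n n" and Xsa: "mstar sinv X = X"
    using X by (auto simp: sa_mats_def)
  have r: "r \<ge> 0" unfolding r_def by (rule operator_space_nrm_nonneg[OF operator_space n Xc])
  \<comment> \<open>for \<open>r = 0\<close> this is \<open>0\<close>, as \<open>inverse 0 = 0\<close>\<close>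
  define X' where "X' = msmul scale (of_real (inverse r)) X"
  have X'c: "X' \<in> carrier_mat n n" unfolding X'_def by (rule msmul_carrier[OF Xc])
  have "X' \<in> sa_mats sinv n"
    using X'c Xsa by (simp add: sa_mats_def X'_def mstar_msmul cj_inverse)
  moreover have "nrm n X' \<le> 1"
    using operator_space_nrm_msmul[OF operator_space n Xc] r
    by (cases "r = 0") (simp_all add: X'_def r_def norm_inverse)
  ultimately obtain c1 c2 X1 X2 where dec: "psd_mat cj n c1" "psd_mat cj n c2"
    "psd_mat cj n (of_real t \<cdot>\<^sub>m 1\<^sub>m n - (c1 * c1 + c2 * c2))" "X1 \<in> K n" "X2 \<in> K n"
    "X' = bimul scale c1 X1 c1 - bimul scale c2 X2 c2"
    using decomposition[OF t n] by blast
  have "X = msmul scale (of_real r) X'"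
  proof (cases "r = 0")
    case True
    then have "X = 0\<^sub>m n n"
      using operator_space_nrm_eq_0_iff[OF operator_space n Xc] by (simp add: r_def)
    then show ?thesis using True X'c by (simp add: msmul_zero)
  next
    case False
    then show ?thesis by (simp add: X'_def msmul_msmul msmul_one flip: of_real_mult)
  qed
  then show ?thesis using that dec by (simp add: r_def)
qed

lemma compress_decomposition:
  assumes n: "n > 0" and X: "X \<in> sa_mats sinv n" and t: "t > 1"
  obtains a1 a2 X1 X2 where "a1 \<in> carrier_mat n n" "a2 \<in> carrier_mat n n" "X1 \<in> K n" "X2 \<in> K n"
    "X = compress scale cj a1 X1 - compress scale cj a2 X2"
    "opnorm (adjm cj a1 * a1 + adjm cj a2 * a2) \<le> nrm n X * t"
proof -
  obtain c1 c2 X1 X2 where c: "psd_mat cj n c1" "psd_mat cj n c2"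
    and M: "psd_mat cj n (of_real t \<cdot>\<^sub>m 1\<^sub>m n - (c1 * c1 + c2 * c2))" and XK: "X1 \<in> K n" "X2 \<in> K n"
    and Xeq: "X = msmul scale (of_real (nrm n X)) (bimul scale c1 X1 c1 - bimul scale c2 X2 c2)"
    using scaled_decomposition[OF n X t] by blast
  define r where "r = nrm n X"
  have r: "r \<ge> 0" unfolding r_def
    using operator_space_nrm_nonneg[OF operator_space n] X by (simp add: sa_mats_def)
  have c1: "c1 \<in> carrier_mat n n" "adjm cj c1 = c1" and c2: "c2 \<in> carrier_mat n n" "adjm cj c2 = c2"
    using c by (simp_all add: psd_mat_def)
  have Xc: "X1 \<in> carrier_mat n n" "X2 \<in> carrier_mat n n" using K_carrier[OF n] XK by auto
  define s where "s = (of_real (sqrt r) :: 'k)"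
  have s: "cj s = s" "s * s = of_real r"
    using r unfolding s_def by (simp_all only: cj_of_real flip: of_real_mult) simp
  have Xeq': "X = compress scale cj (s \<cdot>\<^sub>m c1) X1 - compress scale cj (s \<cdot>\<^sub>m c2) X2"
    using c1 c2 Xc s
    by (subst Xeq) (simp add: compress_smult_selfadjoint msmul_diff[of _ n n] bimul_carrier r_def)
  have gram: "adjm cj (s \<cdot>\<^sub>m c1) * (s \<cdot>\<^sub>m c1) + adjm cj (s \<cdot>\<^sub>m c2) * (s \<cdot>\<^sub>m c2)
      = (of_real r :: 'k) \<cdot>\<^sub>m (c1 * c1 + c2 * c2)"
    using c1 c2 s by (simp add: gram_smult add_smult_distrib_left_mat[of _ n n])
  have "opnorm ((of_real r :: 'k) \<cdot>\<^sub>m (c1 * c1 + c2 * c2)) \<le> r * t"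
    using opnorm_smult_le[of "of_real r" "c1 * c1 + c2 * c2"] opnorm_add_squares_le[OF c1 c2 M] r t
    by (simp add: order_trans mult_left_mono)
  then show ?thesis
    by (intro that[OF _ _ XK Xeq']) (use c1 c2 in \<open>simp_all add: gram r_def\<close>)
qed

lemma map_mat_decomposition:
  assumes n: "n > 0" and X: "X \<in> sa_mats sinv n" and t: "t > 1"
  obtains c1 c2 where "c1 \<in> carrier_mat n n" "adjm cj c1 = c1" "c2 \<in> carrier_mat n n" "adjm cj c2 = c2"
    "psd_mat cj n (of_real t \<cdot>\<^sub>m 1\<^sub>m n - (c1 * c1 + c2 * c2))"
    "map_mat f X = (of_real (nrm n X) :: 'k) \<cdot>\<^sub>m (c1 * c1 - c2 * c2)"
proof -
  obtain c1 c2 X1 X2 where c: "psd_mat cj n c1" "psd_mat cj n c2"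
    and M: "psd_mat cj n (of_real t \<cdot>\<^sub>m 1\<^sub>m n - (c1 * c1 + c2 * c2))" and XK: "X1 \<in> K n" "X2 \<in> K n"
    and Xeq: "X = msmul scale (of_real (nrm n X)) (bimul scale c1 X1 c1 - bimul scale c2 X2 c2)"
    using scaled_decomposition[OF n X t] by blast
  have c1: "c1 \<in> carrier_mat n n" "adjm cj c1 = c1" and c2: "c2 \<in> carrier_mat n n" "adjm cj c2 = c2"
    using c by (simp_all add: psd_mat_def)
  have "map_mat f (bimul scale c X' c) = c * c" if "c \<in> carrier_mat n n" "X' \<in> K n" for c X'
    using that by (simp add: map_mat_bimul[OF that(1) K_carrier[OF n that(2)] that(1)] map_mat_K[OF n])
  then have "map_mat f X = (of_real (nrm n X) :: 'k) \<cdot>\<^sub>m (c1 * c1 - c2 * c2)"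
    using c1 c2 XK K_carrier[OF n]
    by (subst Xeq) (simp add: map_mat_msmul map_mat_diff[of _ n n] bimul_carrier)
  then show ?thesis using that c1 c2 M by blast
qed

theorem nrm_eq_Inf_compress:
  assumes n: "n > 0" and X: "X \<in> sa_mats sinv n"
  shows "nrm n X = Inf {opnorm (adjm cj a1 * a1 + adjm cj a2 * a2) | a1 a2 X1 X2.
    a1 \<in> carrier_mat n n \<and> a2 \<in> carrier_mat n n \<and> X1 \<in> K n \<and> X2 \<in> K n \<and>
    X = compress scale cj a1 X1 - compress scale cj a2 X2}"
proof -
  define S where "S = {opnorm (adjm cj a1 * a1 + adjm cj a2 * a2) | a1 a2 X1 X2.
    a1 \<in> carrier_mat n n \<and> a2 \<in> carrier_mat n n \<and> X1 \<in> K n \<and> X2 \<in> K n \<and>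
    X = compress scale cj a1 X1 - compress scale cj a2 X2}"
  have lower: "nrm n X \<le> y" if "y \<in> S" for y
  proof -
    obtain a1 a2 X1 X2 where a: "a1 \<in> carrier_mat n n" "a2 \<in> carrier_mat n n" and XK: "X1 \<in> K n" "X2 \<in> K n"
      and Xeq: "X = compress scale cj a1 X1 - compress scale cj a2 X2"
      and y: "y = opnorm (adjm cj a1 * a1 + adjm cj a2 * a2)"
      using \<open>y \<in> S\<close> unfolding S_def by blast
    show ?thesis
      unfolding Xeq y using K_carrier[OF n] nrm_K_le[OF n] XK
      by (intro nrm_compress_diff_le[OF operator_space n a]) auto
  qed
  have approx: "\<exists>y\<in>S. y \<le> nrm n X * t" if "t > 1" for t
  proof -
    obtain a1 a2 X1 X2 where "a1 \<in> carrier_mat n n" "a2 \<in> carrier_mat n n" "X1 \<in> K n" "X2 \<in> K n"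
      "X = compress scale cj a1 X1 - compress scale cj a2 X2"
      and bound: "opnorm (adjm cj a1 * a1 + adjm cj a2 * a2) \<le> nrm n X * t"
      by (rule compress_decomposition[OF n X \<open>t > 1\<close>])
    then have "opnorm (adjm cj a1 * a1 + adjm cj a2 * a2) \<in> S"
      unfolding S_def by blast
    with bound show ?thesis by (rule bexI)
  qed
  have "S \<noteq> {}" using approx[of 2] by force
  then have "nrm n X \<le> Inf S" using lower by (rule cInf_greatest)
  moreover have "Inf S \<le> nrm n X"
  proof (rule le_of_le_mult_gt_one)
    fix t :: real assume "t > 1"
    then obtain y where "y \<in> S" "y \<le> nrm n X * t" using approx by blast
    moreover have "bdd_below S" using lower by (rule bdd_belowI)
    ultimately show "Inf S \<le> nrm n X * t" using cInf_lower[of y S] by linarith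
  qed
  ultimately show ?thesis unfolding S_def by linarith
qed

lemma opnorm_map_mat_le_nrm:
  assumes n: "n > 0" and X: "X \<in> sa_mats sinv n"
  shows "opnorm (map_mat f X) \<le> nrm n X"
proof (rule le_of_le_mult_gt_one)
  fix t :: real assume t: "t > 1"
  obtain c1 c2 where c1: "c1 \<in> carrier_mat n n" "adjm cj c1 = c1" and c2: "c2 \<in> carrier_mat n n" "adjm cj c2 = c2"
    and M: "psd_mat cj n (of_real t \<cdot>\<^sub>m 1\<^sub>m n - (c1 * c1 + c2 * c2))"
    and fX: "map_mat f X = (of_real (nrm n X) :: 'k) \<cdot>\<^sub>m (c1 * c1 - c2 * c2)"
    using map_mat_decomposition[OF n X t] by blast
  have r: "nrm n X \<ge> 0"
    using X operator_space_nrm_nonneg[OF operator_space n] by (simp add: sa_mats_def)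
  have "opnorm (map_mat f X) \<le> norm (of_real (nrm n X) :: 'k) * opnorm (c1 * c1 - c2 * c2)"
    unfolding fX by (rule opnorm_smult_le)
  also have "\<dots> \<le> nrm n X * t"
    using opnorm_diff_squares_le[OF c1 c2 M] r t by (simp add: mult_left_mono)
  finally show "opnorm (map_mat f X) \<le> nrm n X * t" .
qed

text \<open>If \<open>b\<^sup>* f(Z) b = 1\<close>, then \<open>b\<^sup>* Z b\<close> lies in \<open>K\<^sub>n\<close> and \<open>Z\<close> is its compression by \<open>b\<^sup>-\<^sup>1\<close>.\<close>

lemma nrm_le_opnorm_map_mat_of_posdef:
  assumes n: "n > 0" and Z: "Z \<in> pos n" and pd: "posdef_mat n (map_mat f Z)"
  shows "nrm n Z \<le> opnorm (map_mat f Z)"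
proof -
  let ?\<beta> = "map_mat f Z"
  have Zc: "Z \<in> carrier_mat n n" by (rule pos_carrier[OF n Z])
  have \<beta>: "?\<beta> \<in> carrier_mat n n" "adjm cj ?\<beta> = ?\<beta>" using pd by (auto simp: posdef_mat_def)
  obtain b where b: "b \<in> carrier_mat n n" "adjm cj b * ?\<beta> * b = 1\<^sub>m n"
    using posdef_mat_congruent_one[OF pd] by blast
  define b' where "b' = adjm cj b * ?\<beta>"
  have b': "b' \<in> carrier_mat n n" unfolding b'_def by (rule mult_carrier_mat[OF adjm_carrier[OF b(1)] \<beta>(1)])
  have bb': "b * b' = 1\<^sub>m n"
    using b(2) unfolding b'_def[symmetric] by (rule mat_mult_left_right_inverse[OF b' b(1)])
  define Y where "Y = compress scale cj b Z"
  have "Y \<in> pos n" unfolding Y_def by (rule pos_compress[OF n n b(1) Z])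
  moreover have "map_mat f Y = 1\<^sub>m n"
    unfolding Y_def compress_def using b by (simp add: map_mat_bimul[OF adjm_carrier[OF b(1)] Zc b(1)])
  ultimately have Y: "Y \<in> K n" using K_eq[OF n] by blast
  have "Z = compress scale cj b' Y"
    unfolding Y_def using b b' Zc by (simp add: compress_compress bb' compress_one)
  moreover have "adjm cj b' * b' = ?\<beta>"
  proof -
    have "adjm cj b' = ?\<beta> * b"
      unfolding b'_def using b \<beta> by (simp add: adjm_mult[of _ n n])
    then have "adjm cj b' * b' = ?\<beta> * (b * b')"
      by (simp add: assoc_mult_mat[OF \<beta>(1) b(1) b'])
    then show ?thesis using \<beta>(1) by (simp add: bb')
  qed
  ultimately show ?thesis
    using nrm_compress_le[OF operator_space n n b' K_carrier[OF n Y] nrm_K_le[OF n Y]] by simp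
qed

lemma map_mat_perturb:
  assumes n: "n > 0" and X: "X \<in> pos n" and k: "k \<in> K n"
  shows "map_mat f (X + msmul scale (of_real e) k) = map_mat f X + (of_real e :: 'k) \<cdot>\<^sub>m 1\<^sub>m n"
  using pos_carrier[OF n X] K_carrier[OF n k]
  by (simp add: map_mat_add[of _ n n] msmul_carrier map_mat_msmul map_mat_K[OF n k])

lemma posdef_map_mat_perturb:
  assumes n: "n > 0" and X: "X \<in> pos n" and k: "k \<in> K n" and e: "e > 0"
  shows "posdef_mat n (map_mat f (X + msmul scale (of_real e) k))"
proof -
  let ?Z = "X + msmul scale (of_real e) k"
  have Z: "?Z \<in> pos n" using e by (intro pos_add[OF n X] pos_msmul[OF n k[THEN set_mp[OF K_subset_pos[OF n]]]]) simp
  have Xc: "map_mat f X \<in> carrier_mat n n" using pos_carrier[OF n X] by simp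
  have "\<exists>r>0. vinner v (map_mat f ?Z *\<^sub>v v) = of_real r"
    if v: "v \<in> carrier_vec n" "v \<noteq> 0\<^sub>v n" for v
  proof -
    obtain \<rho> where \<rho>: "\<rho> \<ge> 0" "vinner v (map_mat f X *\<^sub>v v) = of_real \<rho>"
      using psd_mat_vinner[OF psd_map_mat[OF n X] v(1)] by blast
    have "vinner v (map_mat f ?Z *\<^sub>v v) = vinner v (map_mat f X *\<^sub>v v) + of_real e * vinner v v"
      using Xc v(1)
      by (simp add: map_mat_perturb[OF n X k] add_mult_distrib_mat_vec[of _ n n] smult_mat_mult_vec
          vinner_add_right vinner_smult_right)
    also have "\<dots> = of_real (\<rho> + e * (vnorm v)\<^sup>2)"
      by (simp only: \<rho>(2) vinner_self of_real_add of_real_mult)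
    finally have "vinner v (map_mat f ?Z *\<^sub>v v) = of_real (\<rho> + e * (vnorm v)\<^sup>2)" .
    moreover have "vnorm v > 0"
      using v vnorm_eq_0_iff[of v] vnorm_nonneg[of v] by (simp add: less_le)
    ultimately have "\<rho> + e * (vnorm v)\<^sup>2 > 0" using \<rho>(1) e by (simp add: add_nonneg_pos)
    with \<open>vinner v (map_mat f ?Z *\<^sub>v v) = of_real (\<rho> + e * (vnorm v)\<^sup>2)\<close> show ?thesis by blast
  qed
  then show ?thesis
    using Z pos_carrier[OF n Z] pos_sa_mats[OF n] map_mat_selfadjoint[of ?Z n]
    by (auto simp: posdef_mat_def)
qed

lemma nrm_le_nrm_add_K:
  assumes n: "n > 0" and X: "X \<in> carrier_mat n n" and k: "k \<in> K n" and e: "e \<ge> 0"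
  shows "nrm n X \<le> nrm n (X + msmul scale (of_real e) k) + e"
proof -
  let ?Z = "X + msmul scale (of_real e) k"
  have kc: "k \<in> carrier_mat n n" by (rule K_carrier[OF n k])
  have Zc: "?Z \<in> carrier_mat n n" using X kc by (simp add: msmul_carrier)
  have Xeq: "X = ?Z + msmul scale (of_real (- e)) k"
    using X kc by (intro eq_matI) (auto simp: msmul_def)
  have "nrm n X \<le> nrm n ?Z + nrm n (msmul scale (of_real (- e)) k)"
    using operator_space_nrm_triangle[OF operator_space n Zc msmul_carrier[OF kc], of "of_real (- e)"]
    by (simp only: Xeq[symmetric])
  also have "\<dots> = nrm n ?Z + e * nrm n k"
    using operator_space_nrm_msmul[OF operator_space n kc] e
    by (simp only: norm_of_real abs_minus_cancel abs_of_nonneg)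
  also have "\<dots> \<le> nrm n ?Z + e"
    using nrm_K_le[OF n k] e by (simp add: mult_left_le)
  finally show ?thesis .
qed

lemma nrm_le_opnorm_map_mat:
  assumes n: "n > 0" and X: "X \<in> pos n"
  shows "nrm n X \<le> opnorm (map_mat f X)"
proof (rule field_le_epsilon)
  fix e :: real assume e: "e > 0"
  obtain k where k: "k \<in> K n" using K_nonempty[OF n] .
  define Z where "Z = X + msmul scale (of_real (e / 2)) k"
  have Z: "Z \<in> pos n"
    unfolding Z_def using e by (intro pos_add[OF n X] pos_msmul[OF n k[THEN set_mp[OF K_subset_pos[OF n]]]]) simp
  have "nrm n X \<le> nrm n Z + e / 2"
    unfolding Z_def using e by (intro nrm_le_nrm_add_K[OF n pos_carrier[OF n X] k]) simp
  moreover have "posdef_mat n (map_mat f Z)"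
    unfolding Z_def by (rule posdef_map_mat_perturb[OF n X k]) (use e in simp)
  then have "nrm n Z \<le> opnorm (map_mat f Z)"
    by (rule nrm_le_opnorm_map_mat_of_posdef[OF n Z])
  moreover have "opnorm (map_mat f Z) \<le> opnorm (map_mat f X) + e / 2"
    unfolding Z_def map_mat_perturb[OF n X k] using e pos_carrier[OF n X]
    by (intro order_trans[OF opnorm_add_smult_one_le]) auto
  ultimately show "nrm n X \<le> opnorm (map_mat f X) + e" by linarith
qed

theorem lemma4p3_conclusion_holds: "lemma4p3_conclusion scale cj sinv nrm pos K f"
  unfolding lemma4p3_conclusion_def
proof (intro allI impI conjI ballI)
  fix n :: nat assume n: "n > 0"
  show "nrm n X = Inf {opnorm (adjm cj a1 * a1 + adjm cj a2 * a2) | a1 a2 X1 X2.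
      a1 \<in> carrier_mat n n \<and> a2 \<in> carrier_mat n n \<and> X1 \<in> K n \<and> X2 \<in> K n \<and>
      X = compress scale cj a1 X1 - compress scale cj a2 X2}" if "X \<in> sa_mats sinv n" for X
    using nrm_eq_Inf_compress[OF n that] .
  show "nrm n X = opnorm (map_mat f X)" if X: "X \<in> pos n" for X
  proof (rule antisym)
    show "nrm n X \<le> opnorm (map_mat f X)" by (rule nrm_le_opnorm_map_mat[OF n X])
    show "opnorm (map_mat f X) \<le> nrm n X"
      using X pos_sa_mats[OF n] by (intro opnorm_map_mat_le_nrm[OF n]) blast
  qed
  show "K n = {X \<in> pos n. map_mat f X = 1\<^sub>m n}" by (rule K_eq[OF n])
qed

end

lemma normed_involution_id: "normed_involution (\<lambda>c::real. c)"
  by unfold_locales (simp_all add: power2_eq_square)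

lemma normed_involution_cnj: "normed_involution cnj"
proof
  fix a :: complex
  show "cnj a * a = of_real ((norm a)\<^sup>2)"
    by (simp only: complex_norm_square mult.commute)
qed simp_all

theorem lemma4p3:
  shows "(\<forall>(scale :: real \<Rightarrow> 'a::ab_group_add \<Rightarrow> 'a) sinv nrm pos K f.
            nc_base_norm_space scale (\<lambda>c. c) sinv nrm pos K f \<longrightarrow>
            lemma4p3_conclusion scale (\<lambda>c. c) sinv nrm pos K f)
       \<and> (\<forall>(scale :: complex \<Rightarrow> 'b::ab_group_add \<Rightarrow> 'b) sinv nrm pos K f.
            nc_base_norm_space scale cnj sinv nrm pos K f \<longrightarrow>
            lemma4p3_conclusion scale cnj sinv nrm pos K f)"
  using nc_base.lemma4p3_conclusion_holds[OF nc_base.intro[OF normed_involution_id nc_base_axioms.intro]]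
    nc_base.lemma4p3_conclusion_holds[OF nc_base.intro[OF normed_involution_cnj nc_base_axioms.intro]]
  by blast

end
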